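(* Let $K$ be a field of characteristic $0$, $1\le n\le d$, $X=(x_1,\dots,x_n)$, and let $A=\{a_1^{(d_1)},\dots,a_m^{(d_m)}\}\subset K$ be a multiset ($a_i$ pairwise distinct, repeated $d_i$ times) with $d_1+\cdots+d_m=d$. Let $f=\prod_{i=1}^m(x-a_i)^{d_i}$, $F=\{f(x_1),\dots,f(x_n)\}$ and $v_n=\prod_{1\le i<j\le n}(x_j-x_i)$. Then for every symmetric polynomial $h\in K[X]$, $$r_A(h)=\frac{r_F(v_n\,h)}{v_n},$$ where $r_F(\cdot)$ denotes the normal form modulo the Gröbner basis $F$ with respect to the lexicographic order with $x_1\prec\cdots\prec x_n$, and $r_A(h)$ is the symmetric Hermite interpolant of $h$ with respect to $A$.
   Context: Write $f=x^d+f_{d-1}x^{d-1}+\cdots+f_0$ and let $G=\{g_1,\dots,g_n\}$ with $g_i(x_1,\dots,x_i)=\sum_{k=i-1}^d f_k\,h^{(i)}_{k-i+1}$ ($f_d=1$), where $h^{(i)}_j=\sum_{k_1+\cdots+k_i=j}x_1^{k_1}\cdots x_i^{k_i}$ is the complete homogeneous symmetric polynomial of degree $j$ in $x_1,\dots,x_i$. The symmetric Hermite interpolant of a symmetric $h\in K[X]$ is $r_A(h):=r_G(h)$, the normal form of $h$ modulo the Gröbner basis $G$ for the lexicographic order with $x_1\prec\cdots\prec x_n$; it is a symmetric polynomial of degree $\le d-n$ in each variable. *)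

theory Defs
  imports "HOL-Library.Poly_Mapping" "HOL-Library.Multiset"
    "HOL-Computational_Algebra.Polynomial" "HOL-Combinatorics.Permutations"
begin

text \<open>Multivariate polynomials over 'a in the variables x_0, x_1, ... (index i stands for
  the paper's variable x_(i+1)): finitely supported maps from monomials (exponent vectors
  nat =>0 nat) to coefficients.\<close>

type_synonym 'a mpoly = "(nat \<Rightarrow>\<^sub>0 nat) \<Rightarrow>\<^sub>0 'a"

definition mconst :: "'a::comm_ring_1 \<Rightarrow> 'a mpoly" where
  "mconst c = Poly_Mapping.single 0 c"

definition mvar :: "nat \<Rightarrow> 'a::comm_ring_1 mpoly" where
  "mvar i = Poly_Mapping.single (Poly_Mapping.single i 1) 1"

definition mvars :: "'a::comm_ring_1 mpoly \<Rightarrow> nat set" where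
  "mvars p = \<Union> (Poly_Mapping.keys ` Poly_Mapping.keys p)"

definition mrename :: "(nat \<Rightarrow> nat) \<Rightarrow> 'a::comm_ring_1 mpoly \<Rightarrow> 'a mpoly" where
  "mrename \<sigma> p = (\<Sum>m\<in>Poly_Mapping.keys p.
      mconst (Poly_Mapping.lookup p m) *
      (\<Prod>i\<in>Poly_Mapping.keys m. mvar (\<sigma> i) ^ Poly_Mapping.lookup m i))"

definition symmetric_in :: "nat \<Rightarrow> 'a::comm_ring_1 mpoly \<Rightarrow> bool" where
  "symmetric_in n h \<longleftrightarrow> mvars h \<subseteq> {..<n} \<and>
     (\<forall>\<sigma>. \<sigma> permutes {..<n} \<longrightarrow> mrename \<sigma> h = h)"

definition lex_less :: "(nat \<Rightarrow>\<^sub>0 nat) \<Rightarrow> (nat \<Rightarrow>\<^sub>0 nat) \<Rightarrow> bool" where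
  "lex_less m m' \<longleftrightarrow> (\<exists>k. Poly_Mapping.lookup m k < Poly_Mapping.lookup m' k \<and>
      (\<forall>j>k. Poly_Mapping.lookup m j = Poly_Mapping.lookup m' j))"

definition lead_mono :: "'a::comm_ring_1 mpoly \<Rightarrow> (nat \<Rightarrow>\<^sub>0 nat)" where
  "lead_mono p = (THE m. m \<in> Poly_Mapping.keys p \<and>
      (\<forall>m'\<in>Poly_Mapping.keys p. m' \<noteq> m \<longrightarrow> lex_less m' m))"

definition mono_dvd :: "(nat \<Rightarrow>\<^sub>0 nat) \<Rightarrow> (nat \<Rightarrow>\<^sub>0 nat) \<Rightarrow> bool" where
  "mono_dvd m m' \<longleftrightarrow> (\<forall>i. Poly_Mapping.lookup m i \<le> Poly_Mapping.lookup m' i)"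

definition mideal :: "'a::comm_ring_1 mpoly set \<Rightarrow> 'a mpoly set" where
  "mideal G = {\<Sum>g\<in>G. c g * g | c. True}"

definition normal_form :: "nat \<Rightarrow> 'a::comm_ring_1 mpoly set \<Rightarrow> 'a mpoly \<Rightarrow> 'a mpoly" where
  "normal_form n G h = (THE p. mvars p \<subseteq> {..<n} \<and> h - p \<in> mideal G \<and>
      (\<forall>m\<in>Poly_Mapping.keys p. \<forall>g\<in>G. \<not> mono_dvd (lead_mono g) m))"

definition upoly_at :: "'a::comm_ring_1 poly \<Rightarrow> nat \<Rightarrow> 'a mpoly" where
  "upoly_at f i = (\<Sum>k\<le>degree f. mconst (coeff f k) * mvar i ^ k)"

definition complete_hom :: "nat \<Rightarrow> nat \<Rightarrow> 'a::comm_ring_1 mpoly" where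
  "complete_hom i j = (\<Sum>m\<in>{m::nat \<Rightarrow>\<^sub>0 nat. Poly_Mapping.keys m \<subseteq> {..<i} \<and>
      (\<Sum>k\<in>Poly_Mapping.keys m. Poly_Mapping.lookup m k) = j}.
      Poly_Mapping.single m 1)"

definition mset_poly :: "'a::comm_ring_1 multiset \<Rightarrow> 'a poly" where
  "mset_poly A = prod_mset (image_mset (\<lambda>a. [:-a, 1:]) A)"

definition herm_g :: "'a::comm_ring_1 poly \<Rightarrow> nat \<Rightarrow> 'a mpoly" where
  "herm_g f i = (\<Sum>k\<in>{i-1..degree f}. mconst (coeff f k) * complete_hom i (k - (i - 1)))"

definition herm_G :: "'a::comm_ring_1 poly \<Rightarrow> nat \<Rightarrow> 'a mpoly set" where
  "herm_G f n = herm_g f ` {1..n}"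

definition sym_hermite :: "'a::comm_ring_1 multiset \<Rightarrow> nat \<Rightarrow> 'a mpoly \<Rightarrow> 'a mpoly" where
  "sym_hermite A n h = normal_form n (herm_G (mset_poly A) n) h"

definition herm_F :: "'a::comm_ring_1 multiset \<Rightarrow> nat \<Rightarrow> 'a mpoly set" where
  "herm_F A n = (\<lambda>i. upoly_at (mset_poly A) i) ` {..<n}"

definition vandermonde :: "nat \<Rightarrow> 'a::comm_ring_1 mpoly" where
  "vandermonde n = (\<Prod>(i, j)\<in>{(i, j). i < j \<and> j < n}. mvar j - mvar i)"

end

theory Submission
  imports Defs
begin

(* The k-th members of G and F (variables x_0, x_1, ...), namely g_(k+1) and f(x_k), involve only
   x_0, ..., x_k and are monic in x_k, of degree d - k and d respectively. Modulo such a triangular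
   family every polynomial has a unique remainder whose x_k-degree is below the k-th bound for every
   k, and this remainder is the lex normal form. With r = r_G(h) it therefore suffices to show that
   v_n r is F-reduced and congruent to v_n h modulo F.

   Congruence: for the analogue g_S of g in the variables S, v_S g_S lies in the ideal of F, by
   induction on |S| using (x_a - x_b) g_(T+a+b) = g_(T+a) - g_(T+b).

   Reducedness: the divided difference (p - s_k p) / (x_(k+1) - x_k) maps the ideal of G into itself
   and G-reduced polynomials to G-reduced ones, so it annihilates r when h is symmetric. Hence r is
   symmetric, its bound d - n on the degree in the last variable holds in every variable, and
   multiplying by v_n, of degree n - 1 in each variable, keeps all degrees below d. *)

section \<open>Polynomials as linear combinations of monomials\<close>

abbreviation keys :: "('a \<Rightarrow>\<^sub>0 'b::zero) \<Rightarrow> 'a set" where "keys \<equiv> Poly_Mapping.keys"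

abbreviation lookup :: "('a \<Rightarrow>\<^sub>0 'b::zero) \<Rightarrow> 'a \<Rightarrow> 'b" where "lookup \<equiv> Poly_Mapping.lookup"

abbreviation mmon :: "(nat \<Rightarrow>\<^sub>0 nat) \<Rightarrow> 'a::comm_ring_1 mpoly" where
  "mmon m \<equiv> Poly_Mapping.single m 1"

definition lin_ext :: "((nat \<Rightarrow>\<^sub>0 nat) \<Rightarrow> 'a::comm_ring_1 mpoly) \<Rightarrow> 'a mpoly \<Rightarrow> 'a mpoly" where
  "lin_ext \<phi> p = (\<Sum>m\<in>keys p. mconst (lookup p m) * \<phi> m)"

lemma mconst_mult_single: "mconst c * Poly_Mapping.single m b = Poly_Mapping.single m (c * b)"
  by (simp add: mconst_def mult_single)

lemma mconst_0[simp]: "mconst 0 = 0" by (simp add: mconst_def)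

lemma mconst_1[simp]: "mconst 1 = 1" by (simp add: mconst_def)

lemma mconst_add: "mconst (a + b) = mconst a + mconst b" by (simp add: mconst_def single_add)

lemma lin_ext_add: "lin_ext \<phi> (p + q) = lin_ext \<phi> p + lin_ext \<phi> q"
  unfolding lin_ext_def
  by (rule setsum_keys_plus_distrib) (auto simp: mconst_add distrib_right)

lemma lin_ext_zero[simp]: "lin_ext \<phi> 0 = 0" by (simp add: lin_ext_def)

lemma lin_ext_uminus: "lin_ext \<phi> (- p) = - lin_ext \<phi> p"
  using lin_ext_add[of \<phi> p "-p"] by (simp add: eq_neg_iff_add_eq_0 add.commute)

lemma lin_ext_diff: "lin_ext \<phi> (p - q) = lin_ext \<phi> p - lin_ext \<phi> q"
  using lin_ext_add[of \<phi> p "-q"] lin_ext_uminus[of \<phi> q] by simp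

lemma lin_ext_sum: "lin_ext \<phi> (sum f A) = (\<Sum>a\<in>A. lin_ext \<phi> (f a))"
  by (induction A rule: infinite_finite_induct) (auto simp: lin_ext_add)

lemma lin_ext_single: "lin_ext \<phi> (Poly_Mapping.single m c) = mconst c * \<phi> m"
  by (cases "c = 0") (auto simp: lin_ext_def)

lemma lin_ext_mult_left: "q * lin_ext \<phi> p = lin_ext (\<lambda>m. q * \<phi> m) p"
  unfolding lin_ext_def by (simp add: sum_distrib_left ac_simps)

lemma lin_ext_cong: "(\<And>m. m \<in> keys p \<Longrightarrow> \<phi> m = \<psi> m) \<Longrightarrow> lin_ext \<phi> p = lin_ext \<psi> p"
  unfolding lin_ext_def by simp

lemma lin_ext_mmon: "lin_ext mmon p = p"
proof (rule poly_mapping_eqI)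
  fix x
  have "lookup (lin_ext mmon p) x = (\<Sum>m\<in>keys p. lookup (Poly_Mapping.single m (lookup p m)) x)"
    by (simp add: lin_ext_def mconst_mult_single lookup_sum)
  also have "\<dots> = (\<Sum>m\<in>keys p. if m = x then lookup p m else 0)"
    by (rule sum.cong) (auto simp: lookup_single)
  also have "\<dots> = lookup p x" by (auto simp: in_keys_iff)
  finally show "lookup (lin_ext mmon p) x = lookup p x" .
qed

lemma keys_mconst_mult: "keys (mconst c * q) \<subseteq> keys q"
  using keys_mult[of "mconst c" q] by (auto simp: mconst_def split: if_splits)

lemma keys_lin_ext: "keys (lin_ext \<phi> p) \<subseteq> (\<Union>m\<in>keys p. keys (\<phi> m))"
proof -
  have "keys (lin_ext \<phi> p) \<subseteq> (\<Union>m\<in>keys p. keys (mconst (lookup p m) * \<phi> m))"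
    unfolding lin_ext_def by (rule keys_sum)
  also have "\<dots> \<subseteq> (\<Union>m\<in>keys p. keys (\<phi> m))"
    using keys_mconst_mult by blast
  finally show ?thesis .
qed

lemma mpoly_induct[case_names zero single]:
  fixes p :: "'a::comm_ring_1 mpoly"
  assumes "P 0" and "\<And>m c p. P p \<Longrightarrow> P (Poly_Mapping.single m c + p)"
  shows "P p"
proof -
  have "P (\<Sum>m\<in>M. Poly_Mapping.single m (lookup p m))" if "finite M" for M
    using that by (induction M rule: finite_induct) (auto intro: assms)
  moreover have "(\<Sum>m\<in>keys p. Poly_Mapping.single m (lookup p m)) = p"
    using lin_ext_mmon[of p] by (simp add: lin_ext_def mconst_mult_single)
  ultimately show ?thesis by (metis finite_keys)
qed

lemma additive_eqI:
  fixes L1 L2 :: "'a::comm_ring_1 mpoly \<Rightarrow> 'b::comm_ring_1 mpoly"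
  assumes "\<And>p q. L1 (p + q) = L1 p + L1 q" "\<And>p q. L2 (p + q) = L2 p + L2 q"
    and "\<And>m c. L1 (Poly_Mapping.single m c) = L2 (Poly_Mapping.single m c)"
  shows "L1 p = L2 p"
proof (induction p rule: mpoly_induct)
  case zero
  have "L1 0 = 0" using assms(1)[of 0 0] by simp
  moreover have "L2 0 = 0" using assms(2)[of 0 0] by simp
  ultimately show ?case by simp
next
  case (single m c p)
  then show ?case by (simp add: assms)
qed

lemma mvar_power: "mvar i ^ j = mmon (Poly_Mapping.single i j)"
  by (induction j) (auto simp: mvar_def mult_single single_add[symmetric] add.commute)

lemma mmon_add: "mmon (a + b) = (mmon a * mmon b :: 'a::comm_ring_1 mpoly)"
  by (simp add: mult_single)

lemma lookup_mconst_mult: "lookup (mconst a * q) m = a * lookup q m"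
proof (induction q rule: mpoly_induct)
  case (single m' c p)
  then show ?case by (simp add: distrib_left lookup_add mconst_def mult_single lookup_single when_def)
qed simp

lemma lookup_mmon_mult: "lookup (mmon m * q) (m + x) = lookup q x"
proof -
  have "mmon m * q = lin_ext (\<lambda>x. mmon (m + x)) q"
    using lin_ext_mult_left[of "mmon m" mmon q] by (simp add: lin_ext_mmon mmon_add)
  then have "lookup (mmon m * q) (m + x) = (\<Sum>y\<in>keys q. lookup (Poly_Mapping.single (m + y) (lookup q y)) (m + x))"
    by (simp add: lin_ext_def mconst_mult_single lookup_sum)
  also have "\<dots> = (\<Sum>y\<in>keys q. if y = x then lookup q y else 0)"
    by (rule sum.cong) (auto simp: lookup_single)
  also have "\<dots> = lookup q x" by (auto simp: in_keys_iff)
  finally show ?thesis .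
qed

lemma keys_mult_sub: "m \<in> keys (p * q) \<Longrightarrow> \<exists>a b. m = a + b \<and> a \<in> keys p \<and> b \<in> keys q"
  using keys_mult[of p q] by blast

definition mfilter :: "((nat \<Rightarrow>\<^sub>0 nat) \<Rightarrow> bool) \<Rightarrow> 'a::comm_ring_1 mpoly \<Rightarrow> 'a mpoly" where
  "mfilter P p = Poly_Mapping.mapp (\<lambda>m c. if P m then c else 0) p"

lemma lookup_mfilter: "lookup (mfilter P p) m = (if P m then lookup p m else 0)"
  by (auto simp: mfilter_def lookup_mapp when_def in_keys_iff)

lemma keys_mfilter: "keys (mfilter P p) = {m\<in>keys p. P m}"
  by (auto simp: in_keys_iff lookup_mfilter split: if_splits)

lemma keys_diff_mfilter: "m \<in> keys (p - mfilter P p) \<Longrightarrow> m \<in> keys p \<and> \<not> P m"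
  by (auto simp: in_keys_iff lookup_minus lookup_mfilter split: if_splits)

section \<open>Complete homogeneous symmetric polynomials\<close>

definition mono_degree :: "(nat \<Rightarrow>\<^sub>0 nat) \<Rightarrow> nat" where
  "mono_degree m = (\<Sum>k\<in>keys m. lookup m k)"

definition monos_deg :: "nat set \<Rightarrow> nat \<Rightarrow> (nat \<Rightarrow>\<^sub>0 nat) set" where
  "monos_deg S j = {m. keys m \<subseteq> S \<and> mono_degree m = j}"

definition hsym :: "nat set \<Rightarrow> nat \<Rightarrow> 'a::comm_ring_1 mpoly" where
  "hsym S j = (\<Sum>m\<in>monos_deg S j. mmon m)"

lemma complete_hom_eq_hsym: "complete_hom i j = hsym {..<i} j"
  by (simp add: complete_hom_def hsym_def monos_deg_def mono_degree_def)

lemma mono_degree_superset: "finite T \<Longrightarrow> keys m \<subseteq> T \<Longrightarrow> mono_degree m = (\<Sum>k\<in>T. lookup m k)"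
  unfolding mono_degree_def by (rule sum.mono_neutral_left) (auto simp: in_keys_iff)

lemma mono_degree_add: "mono_degree (m1 + m2) = mono_degree m1 + mono_degree m2"
proof -
  let ?T = "keys m1 \<union> keys m2"
  have "mono_degree (m1 + m2) = (\<Sum>k\<in>?T. lookup (m1 + m2) k)"
    using keys_add[of m1 m2] by (intro mono_degree_superset) auto
  also have "\<dots> = (\<Sum>k\<in>?T. lookup m1 k) + (\<Sum>k\<in>?T. lookup m2 k)"
    by (simp add: lookup_add sum.distrib)
  also have "\<dots> = mono_degree m1 + mono_degree m2"
    by (simp add: mono_degree_superset[symmetric])
  finally show ?thesis .
qed

lemma mono_degree_single[simp]: "mono_degree (Poly_Mapping.single k a) = a"
  by (simp add: mono_degree_def)

lemma mono_degree_eq_0: "mono_degree m = 0 \<longleftrightarrow> m = 0"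
  by (auto simp: mono_degree_def in_keys_iff intro: poly_mapping_eqI)

lemma lookup_le_mono_degree: "lookup m k \<le> mono_degree m"
proof (cases "k \<in> keys m")
  case True
  then show ?thesis unfolding mono_degree_def by (intro member_le_sum) auto
qed (simp add: in_keys_iff)

lemma mono_degree_eq_lookup_imp_single: "lookup m k = mono_degree m \<Longrightarrow> m = Poly_Mapping.single k (mono_degree m)"
proof -
  assume a: "lookup m k = mono_degree m"
  have "mono_degree m = (\<Sum>l\<in>insert k (keys m). lookup m l)" by (rule mono_degree_superset) auto
  also have "\<dots> = lookup m k + (\<Sum>l\<in>keys m - {k}. lookup m l)"
    by (simp add: sum.insert_remove)
  finally have "(\<Sum>l\<in>keys m - {k}. lookup m l) = 0" using a by simp
  then have z: "l \<in> keys m - {k} \<Longrightarrow> lookup m l = 0" for l by simp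
  show ?thesis
  proof (rule poly_mapping_eqI)
    fix l show "lookup m l = lookup (Poly_Mapping.single k (mono_degree m)) l"
      using z[of l] a by (cases "l = k") (auto simp: lookup_single in_keys_iff)
  qed
qed

lemma finite_monos_deg: assumes "finite S" shows "finite (monos_deg S j)"
proof -
  let ?B = "{f::nat \<Rightarrow> nat. \<forall>x. (x \<in> S \<longrightarrow> f x \<in> {..j}) \<and> (x \<notin> S \<longrightarrow> f x = 0)}"
  have fin: "finite ?B" using assms by (intro finite_set_of_finite_funs) auto
  have "lookup ` monos_deg S j \<subseteq> ?B"
    using lookup_le_mono_degree by (fastforce simp: monos_deg_def in_keys_iff)
  then have "finite (lookup ` monos_deg S j)" using fin finite_subset by blast
  moreover have "inj_on lookup (monos_deg S j)" by (auto intro: inj_onI poly_mapping_eqI)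
  ultimately show ?thesis using finite_imageD by blast
qed

lemma monos_deg_0: "monos_deg S 0 = {0}" by (auto simp: monos_deg_def mono_degree_eq_0)

lemma hsym_0[simp]: "hsym S 0 = 1" by (simp add: hsym_def monos_deg_0)

lemma monos_deg_empty_Suc: "monos_deg {} (Suc j) = {}" by (auto simp: monos_deg_def mono_degree_def)

lemma hsym_empty_Suc[simp]: "hsym {} (Suc j) = 0" by (simp add: hsym_def monos_deg_empty_Suc)

lemma monos_deg_insert_Suc:
  assumes "a \<notin> S"
  shows "monos_deg (insert a S) (Suc j) = monos_deg S (Suc j) \<union> (\<lambda>m. m + Poly_Mapping.single a 1) ` monos_deg (insert a S) j"
proof (intro equalityI subsetI)
  fix m assume m: "m \<in> monos_deg (insert a S) (Suc j)"
  show "m \<in> monos_deg S (Suc j) \<union> (\<lambda>m. m + Poly_Mapping.single a 1) ` monos_deg (insert a S) j"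
  proof (cases "lookup m a = 0")
    case True
    then have "keys m \<subseteq> S" using m by (auto simp: monos_deg_def in_keys_iff)
    then show ?thesis using m by (auto simp: monos_deg_def)
  next
    case False
    define m' where "m' = m - Poly_Mapping.single a 1"
    have mm: "m = m' + Poly_Mapping.single a 1"
      using False by (intro poly_mapping_eqI) (auto simp: m'_def lookup_add lookup_minus lookup_single when_def)
    have "keys m' \<subseteq> keys m" by (auto simp: m'_def in_keys_iff lookup_minus)
    moreover have "mono_degree m' = j" using m mm mono_degree_add[of m' "Poly_Mapping.single a 1"] by (simp add: monos_deg_def)
    ultimately have "m' \<in> monos_deg (insert a S) j" using m by (auto simp: monos_deg_def)
    then show ?thesis using mm by blast
  qed
next
  fix m assume "m \<in> monos_deg S (Suc j) \<union> (\<lambda>m. m + Poly_Mapping.single a 1) ` monos_deg (insert a S) j"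
  then show "m \<in> monos_deg (insert a S) (Suc j)"
  proof
    assume "m \<in> monos_deg S (Suc j)" then show ?thesis by (auto simp: monos_deg_def)
  next
    assume "m \<in> (\<lambda>m. m + Poly_Mapping.single a 1) ` monos_deg (insert a S) j"
    then obtain m' where m': "m' \<in> monos_deg (insert a S) j" "m = m' + Poly_Mapping.single a 1" by auto
    have "keys m \<subseteq> insert a S" using m' keys_add[of m' "Poly_Mapping.single a 1"] by (auto simp: monos_deg_def)
    moreover have "mono_degree m = Suc j" using m' by (simp add: mono_degree_add monos_deg_def)
    ultimately show ?thesis by (simp add: monos_deg_def)
  qed
qed

lemma hsym_insert_Suc:
  assumes "finite S" "a \<notin> S"
  shows "hsym (insert a S) (Suc j) = hsym S (Suc j) + mvar a * (hsym (insert a S) j :: 'a::comm_ring_1 mpoly)"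
proof -
  let ?f = "\<lambda>m. m + Poly_Mapping.single a 1"
  have "a \<in> keys (m + Poly_Mapping.single a 1)" for m :: "nat \<Rightarrow>\<^sub>0 nat"
    by (simp add: in_keys_iff lookup_add)
  then have disj: "monos_deg S (Suc j) \<inter> ?f ` monos_deg (insert a S) j = {}"
    using assms(2) by (auto simp: monos_deg_def)
  have inj: "inj_on ?f (monos_deg (insert a S) j)" by (auto intro: inj_onI)
  have "hsym (insert a S) (Suc j) = (\<Sum>m\<in>monos_deg S (Suc j). mmon m) + (\<Sum>m\<in>?f ` monos_deg (insert a S) j. mmon m :: 'a mpoly)"
    unfolding hsym_def monos_deg_insert_Suc[OF assms(2)]
    using assms finite_monos_deg disj by (intro sum.union_disjoint) auto
  also have "(\<Sum>m\<in>?f ` monos_deg (insert a S) j. mmon m :: 'a mpoly) = (\<Sum>m\<in>monos_deg (insert a S) j. mmon (?f m))"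
    using inj by (simp add: sum.reindex)
  also have "\<dots> = mvar a * hsym (insert a S) j"
    by (simp add: hsym_def sum_distrib_left mvar_def mult_single add.commute)
  finally show ?thesis by (simp add: hsym_def)
qed

lemma hsym_diff:
  assumes "finite T" "a \<notin> T" "b \<notin> T" "a \<noteq> b"
  shows "(mvar a - mvar b) * (hsym (insert a (insert b T)) j :: 'a::comm_ring_1 mpoly)
     = hsym (insert a T) (Suc j) - hsym (insert b T) (Suc j)"
proof -
  have 1: "hsym (insert a (insert b T)) (Suc j) = hsym (insert b T) (Suc j) + mvar a * (hsym (insert a (insert b T)) j :: 'a mpoly)"
    using assms by (intro hsym_insert_Suc) auto
  have 2: "hsym (insert b (insert a T)) (Suc j) = hsym (insert a T) (Suc j) + mvar b * (hsym (insert b (insert a T)) j :: 'a mpoly)"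
    using assms by (intro hsym_insert_Suc) auto
  have e: "insert b (insert a T) = insert a (insert b T)" by auto
  from 1 2 show ?thesis unfolding e by (simp add: algebra_simps)
qed

lemma lookup_hsym: "finite S \<Longrightarrow> lookup (hsym S j) m = (if m \<in> monos_deg S j then 1 else 0)"
  by (simp add: hsym_def lookup_sum lookup_single finite_monos_deg when_def)

lemma keys_hsym: "keys (hsym S j) \<subseteq> monos_deg S j"
  unfolding hsym_def using keys_sum[of mmon "monos_deg S j"] by auto

lemma hsym_single: "hsym {a} j = mvar a ^ j"
proof (induction j)
  case (Suc j)
  have "hsym (insert a {}) (Suc j) = hsym {} (Suc j) + mvar a * (hsym (insert a {}) j :: 'a mpoly)"
    by (rule hsym_insert_Suc) auto
  then show ?case using Suc by simp
qed simp

definition herm_gs :: "'a::comm_ring_1 poly \<Rightarrow> nat set \<Rightarrow> 'a mpoly" where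
  "herm_gs f S = (\<Sum>k\<in>{card S - 1..degree f}. mconst (coeff f k) * hsym S (k - (card S - 1)))"

lemma herm_g_eq_herm_gs: "herm_g f i = herm_gs f {..<i}"
  by (simp add: herm_g_def herm_gs_def complete_hom_eq_hsym)

lemma herm_gs_single: "herm_gs f {a} = upoly_at f a"
  by (simp add: herm_gs_def upoly_at_def hsym_single atLeast0AtMost)

lemma herm_gs_diff:
  assumes "finite T" "a \<notin> T" "b \<notin> T" "a \<noteq> b"
  shows "(mvar a - mvar b) * herm_gs f (insert a (insert b T)) = herm_gs f (insert a T) - herm_gs f (insert b T)"
proof -
  let ?c = "card T" and ?d = "degree f"
  have cU: "card (insert a (insert b T)) = ?c + 2" using assms by simp
  have ca: "card (insert a T) = ?c + 1" and cb: "card (insert b T) = ?c + 1" using assms by simp_all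
  have "(mvar a - mvar b) * herm_gs f (insert a (insert b T))
      = (\<Sum>k\<in>{?c+1..?d}. mconst (coeff f k) * (hsym (insert a T) (Suc (k - (?c + 1))) - hsym (insert b T) (Suc (k - (?c + 1)))))"
    unfolding herm_gs_def cU using assms
    by (simp add: sum_distrib_left hsym_diff[symmetric] ac_simps)
  also have "\<dots> = (\<Sum>k\<in>{?c+1..?d}. mconst (coeff f k) * (hsym (insert a T) (k - ?c) - hsym (insert b T) (k - ?c)))"
    by (intro sum.cong refl) (auto simp: Suc_diff_Suc)
  also have "\<dots> = (\<Sum>k\<in>{?c..?d}. mconst (coeff f k) * (hsym (insert a T) (k - ?c) - hsym (insert b T) (k - ?c)))"
  proof (cases "?c \<le> ?d")
    case True
    then have "{?c..?d} = insert ?c {?c+1..?d}" by auto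
    then show ?thesis by simp
  next
    case False
    then show ?thesis by simp
  qed
  also have "\<dots> = herm_gs f (insert a T) - herm_gs f (insert b T)"
    unfolding herm_gs_def ca cb by (simp add: sum_subtractf algebra_simps)
  finally show ?thesis .
qed

lemma keys_herm_gs:
  assumes "m \<in> keys (herm_gs f S)"
  shows "keys m \<subseteq> S" "mono_degree m \<le> degree f + 1 - card S"
proof -
  have "keys (herm_gs f S) \<subseteq> (\<Union>j\<in>{card S - 1..degree f}. keys (mconst (coeff f j) * hsym S (j - (card S - 1))))"
    unfolding herm_gs_def by (rule keys_sum)
  then obtain j where j: "j \<in> {card S - 1..degree f}"
    and "m \<in> keys (mconst (coeff f j) * hsym S (j - (card S - 1)))"
    using assms by blast
  then have "m \<in> monos_deg S (j - (card S - 1))"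
    using keys_mconst_mult keys_hsym by blast
  then show "keys m \<subseteq> S" "mono_degree m \<le> degree f + 1 - card S"
    using j by (auto simp: monos_deg_def)
qed

lemma lookup_herm_gs_top:
  fixes f :: "'a::comm_ring_1 poly"
  assumes "finite S" "k \<in> S" "card S \<le> degree f" "lead_coeff f = 1"
  shows "lookup (herm_gs f S) (Poly_Mapping.single k (degree f + 1 - card S)) = 1"
proof -
  let ?c = "card S" and ?d = "degree f"
  let ?L = "Poly_Mapping.single k (?d + 1 - ?c)"
  have c: "1 \<le> ?c" using assms(1,2) by (metis One_nat_def Suc_leI card_gt_0_iff empty_iff)
  have "lookup (herm_gs f S) ?L
      = (\<Sum>j\<in>{?c - 1..?d}. coeff f j * (if ?L \<in> monos_deg S (j - (?c - 1)) then 1 else 0))"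
    unfolding herm_gs_def lookup_sum by (simp add: lookup_mconst_mult lookup_hsym assms(1))
  also have "\<dots> = (\<Sum>j\<in>{?c - 1..?d}. if j = ?d then coeff f j else 0)"
  proof (intro sum.cong refl)
    fix j assume "j \<in> {?c - 1..?d}"
    then have "?L \<in> monos_deg S (j - (?c - 1)) \<longleftrightarrow> j = ?d"
      using assms(2,3) c by (auto simp: monos_deg_def)
    then show "coeff f j * (if ?L \<in> monos_deg S (j - (?c - 1)) then 1 else 0) = (if j = ?d then coeff f j else 0)"
      by simp
  qed
  also have "\<dots> = 1" using assms(3,4) by simp
  finally show ?thesis .
qed

lemma mset_poly_monic:
  "degree (mset_poly A :: 'a::idom poly) = size A \<and> coeff (mset_poly A) (degree (mset_poly A)) = 1"
proof (induction A)
  case empty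
  then show ?case by (simp add: mset_poly_def)
next
  case (add a A)
  have eq: "mset_poly (add_mset a A) = [:-a, 1:] * mset_poly A" by (simp add: mset_poly_def)
  have nz: "mset_poly A \<noteq> 0" using add by auto
  have "degree ([:-a, 1:] * mset_poly A) = 1 + degree (mset_poly A)"
    using nz by (subst degree_mult_eq) auto
  moreover have l: "lead_coeff ([:-a, 1:] * mset_poly A) = 1"
  proof -
    have h1: "lead_coeff ([:-a, 1:] :: 'a poly) = 1" by simp
    have h2: "lead_coeff (mset_poly A) = 1" using add by blast
    show ?thesis using lead_coeff_mult[of "[:-a, 1:]" "mset_poly A"] h1 h2 by (metis mult_1)
  qed
  ultimately have d: "degree (mset_poly (add_mset a A)) = size (add_mset a A)" using add eq by simp
  have "lead_coeff (mset_poly (add_mset a A)) = 1" unfolding eq by (rule l)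
  then show ?case using d by blast
qed

section \<open>Renaming variables\<close>

definition mono_rename :: "(nat \<Rightarrow> nat) \<Rightarrow> (nat \<Rightarrow>\<^sub>0 nat) \<Rightarrow> (nat \<Rightarrow>\<^sub>0 nat)" where
  "mono_rename \<sigma> m = (\<Sum>i\<in>keys m. Poly_Mapping.single (\<sigma> i) (lookup m i))"

lemma mono_rename_add: "mono_rename \<sigma> (m1 + m2) = mono_rename \<sigma> m1 + mono_rename \<sigma> m2"
  unfolding mono_rename_def by (rule setsum_keys_plus_distrib) (auto simp: single_add)

lemma mono_rename_0[simp]: "mono_rename \<sigma> 0 = 0" by (simp add: mono_rename_def)

lemma prod_mmon: "(\<Prod>i\<in>A. mmon (g i)) = (mmon (\<Sum>i\<in>A. g i) :: 'a::comm_ring_1 mpoly)"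
  by (induction A rule: infinite_finite_induct) (auto simp: mult_single)

lemma mrename_lin_ext: "mrename \<sigma> p = lin_ext (\<lambda>m. mmon (mono_rename \<sigma> m)) p"
  unfolding mrename_def lin_ext_def mono_rename_def by (simp add: mvar_power prod_mmon)

lemma mrename_add: "mrename \<sigma> (p + q) = mrename \<sigma> p + mrename \<sigma> q"
  by (simp add: mrename_lin_ext lin_ext_add)

lemma mrename_sum: "mrename \<sigma> (sum f A) = (\<Sum>a\<in>A. mrename \<sigma> (f a))"
  by (simp add: mrename_lin_ext lin_ext_sum)

lemma mrename_single: "mrename \<sigma> (Poly_Mapping.single m c) = Poly_Mapping.single (mono_rename \<sigma> m) c"
  by (simp add: mrename_lin_ext lin_ext_single mconst_mult_single)

lemma mrename_mult: "mrename \<sigma> (p * q) = mrename \<sigma> p * mrename \<sigma> q"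
proof -
  have single_case: "mrename \<sigma> (Poly_Mapping.single m c * q) = mrename \<sigma> (Poly_Mapping.single m c) * mrename \<sigma> q" for m c
    by (rule additive_eqI[of "\<lambda>q. mrename \<sigma> (Poly_Mapping.single m c * q)"
            "\<lambda>q. mrename \<sigma> (Poly_Mapping.single m c) * mrename \<sigma> q"])
       (auto simp: mrename_add distrib_left mrename_single mult_single mono_rename_add)
  show ?thesis
    by (rule additive_eqI[of "\<lambda>p. mrename \<sigma> (p * q)" "\<lambda>p. mrename \<sigma> p * mrename \<sigma> q"])
       (auto simp: mrename_add distrib_right single_case)
qed

lemma mrename_mconst[simp]: "mrename \<sigma> (mconst c) = mconst c"
  by (simp add: mconst_def mrename_single)

locale involution =
  fixes \<sigma> :: "nat \<Rightarrow> nat"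
  assumes involution: "\<And>i. \<sigma> (\<sigma> i) = i"
begin

lemma inj: "inj \<sigma>" by (metis injI involution)

lemma lookup_mono_rename: "lookup (mono_rename \<sigma> m) l = lookup m (\<sigma> l)"
proof -
  have "lookup (mono_rename \<sigma> m) l = (\<Sum>i\<in>keys m. if i = \<sigma> l then lookup m i else 0)"
    unfolding mono_rename_def lookup_sum by (intro sum.cong refl) (auto simp: lookup_single involution when_def)
  also have "\<dots> = lookup m (\<sigma> l)" by (auto simp: in_keys_iff)
  finally show ?thesis .
qed

lemma mono_rename_mono_rename[simp]: "mono_rename \<sigma> (mono_rename \<sigma> m) = m"
  by (rule poly_mapping_eqI) (simp add: lookup_mono_rename involution)

lemma inj_mono_rename: "inj (mono_rename \<sigma>)"
  by (metis injI mono_rename_mono_rename)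

lemma keys_mono_rename: "keys (mono_rename \<sigma> m) = \<sigma> ` keys m"
proof (intro equalityI subsetI)
  fix l assume "l \<in> keys (mono_rename \<sigma> m)"
  then have "\<sigma> l \<in> keys m" by (simp add: in_keys_iff lookup_mono_rename)
  then show "l \<in> \<sigma> ` keys m" by (metis involution rev_image_eqI)
qed (auto simp: in_keys_iff lookup_mono_rename involution)

lemma mono_degree_mono_rename: "mono_degree (mono_rename \<sigma> m) = mono_degree m"
proof -
  have "mono_degree (mono_rename \<sigma> m) = (\<Sum>l\<in>\<sigma> ` keys m. lookup m (\<sigma> l))"
    by (simp add: mono_degree_def keys_mono_rename lookup_mono_rename)
  also have "\<dots> = (\<Sum>i\<in>keys m. lookup m (\<sigma> (\<sigma> i)))"
    using inj by (simp add: sum.reindex inj_on_def)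
  finally show ?thesis by (simp add: involution mono_degree_def)
qed

lemma lookup_mrename: "lookup (mrename \<sigma> p) m = lookup p (mono_rename \<sigma> m)"
proof -
  have "lookup (mrename \<sigma> p) m = (\<Sum>x\<in>keys p. if x = mono_rename \<sigma> m then lookup p x else 0)"
    unfolding mrename_lin_ext lin_ext_def lookup_sum mconst_mult_single
    by (intro sum.cong refl) (auto simp: lookup_single when_def)
  also have "\<dots> = lookup p (mono_rename \<sigma> m)" by (auto simp: in_keys_iff)
  finally show ?thesis .
qed

lemma keys_mrename: "keys (mrename \<sigma> p) = mono_rename \<sigma> ` keys p"
proof (intro equalityI subsetI)
  fix l assume "l \<in> keys (mrename \<sigma> p)"
  then have "mono_rename \<sigma> l \<in> keys p" by (simp add: in_keys_iff lookup_mrename)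
  then show "l \<in> mono_rename \<sigma> ` keys p" by (metis mono_rename_mono_rename rev_image_eqI)
qed (auto simp: in_keys_iff lookup_mrename)

lemma mono_rename_monos_deg: "mono_rename \<sigma> ` monos_deg S j = monos_deg (\<sigma> ` S) j"
proof -
  have sub: "mono_rename \<sigma> ` monos_deg S j \<subseteq> monos_deg (\<sigma> ` S) j" for S
    by (auto simp: monos_deg_def keys_mono_rename mono_degree_mono_rename) blast
  have "monos_deg (\<sigma> ` S) j = mono_rename \<sigma> ` mono_rename \<sigma> ` monos_deg (\<sigma> ` S) j" by (simp add: image_image)
  also have "\<dots> \<subseteq> mono_rename \<sigma> ` monos_deg (\<sigma> ` \<sigma> ` S) j" using sub by blast
  also have "\<sigma> ` \<sigma> ` S = S" by (simp add: image_image involution)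
  finally show ?thesis using sub by blast
qed

lemma mrename_hsym: "mrename \<sigma> (hsym S j) = hsym (\<sigma> ` S) j"
proof -
  have "mrename \<sigma> (hsym S j) = (\<Sum>m\<in>monos_deg S j. mmon (mono_rename \<sigma> m))"
    by (simp add: hsym_def mrename_sum mrename_single)
  also have "\<dots> = (\<Sum>m\<in>mono_rename \<sigma> ` monos_deg S j. mmon m)"
    using inj_mono_rename by (simp add: sum.reindex inj_on_def)
  finally show ?thesis by (simp add: hsym_def mono_rename_monos_deg)
qed

lemma mrename_herm_gs: "mrename \<sigma> (herm_gs f S) = herm_gs f (\<sigma> ` S)"
proof -
  have "card (\<sigma> ` S) = card S" using inj by (simp add: card_image inj_on_def)
  then show ?thesis
    by (simp add: herm_gs_def mrename_sum mrename_mult mrename_hsym)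
qed

end

interpretation transpose: involution "transpose a b"
  by unfold_locales (rule transpose_involutory)

section \<open>Divided differences\<close>

definition mono_clear :: "nat \<Rightarrow> (nat \<Rightarrow>\<^sub>0 nat) \<Rightarrow> (nat \<Rightarrow>\<^sub>0 nat)" where
  "mono_clear n m = Poly_Mapping.update n 0 m"

lemma lookup_mono_clear: "lookup (mono_clear n m) l = (if l = n then 0 else lookup m l)"
  by (simp add: mono_clear_def lookup_update)

definition mono_upd_pair :: "nat \<Rightarrow> (nat \<Rightarrow>\<^sub>0 nat) \<Rightarrow> nat \<Rightarrow> nat \<Rightarrow> (nat \<Rightarrow>\<^sub>0 nat)" where
  "mono_upd_pair k m \<alpha> \<beta> = Poly_Mapping.update k \<alpha> (Poly_Mapping.update (Suc k) \<beta> m)"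

lemma lookup_mono_upd_pair: "lookup (mono_upd_pair k m \<alpha> \<beta>) l = (if l = k then \<alpha> else if l = Suc k then \<beta> else lookup m l)"
  by (simp add: mono_upd_pair_def lookup_update)

lemma mono_upd_pair_self: "mono_upd_pair k m (lookup m k) (lookup m (Suc k)) = m"
  by (rule poly_mapping_eqI) (simp add: lookup_mono_upd_pair)

lemma mono_upd_pair_swap: "mono_upd_pair k m (lookup m (Suc k)) (lookup m k) = mono_rename (transpose k (Suc k)) m"
  by (rule poly_mapping_eqI) (simp add: lookup_mono_upd_pair transpose.lookup_mono_rename transpose_def)

lemma mmon_mono_upd_pair:
  "(mmon (mono_upd_pair k m \<alpha> \<beta>) :: 'a::comm_ring_1 mpoly) = mmon (mono_clear k (mono_clear (Suc k) m)) * mvar k ^ \<alpha> * mvar (Suc k) ^ \<beta>"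
proof -
  have split: "mono_upd_pair k m \<alpha> \<beta> = mono_clear k (mono_clear (Suc k) m) + Poly_Mapping.single k \<alpha> + Poly_Mapping.single (Suc k) \<beta>"
    by (rule poly_mapping_eqI) (simp add: lookup_mono_upd_pair lookup_mono_clear lookup_add lookup_single when_def)
  show ?thesis by (subst split) (simp add: mvar_power mult_single)
qed

lemma diff_mult_sum_monomials:
  fixes M X Y :: "'a::comm_ring_1"
  shows "(Y - X) * (\<Sum>i<c. M * X ^ (a + (c - Suc i)) * Y ^ (a + i)) = M * X ^ a * Y ^ (a + c) - M * X ^ (a + c) * Y ^ a"
proof -
  have "(\<Sum>i<c. M * X ^ (a + (c - Suc i)) * Y ^ (a + i)) = (\<Sum>i<c. M * (X * Y) ^ a * (Y ^ i * X ^ (c - Suc i)))"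
    by (intro sum.cong refl) (simp only: power_add power_mult_distrib mult_ac)
  then have "(Y - X) * (\<Sum>i<c. M * X ^ (a + (c - Suc i)) * Y ^ (a + i))
      = M * (X * Y) ^ a * ((Y - X) * (\<Sum>i<c. Y ^ i * X ^ (c - Suc i)))"
    by (simp add: sum_distrib_left ac_simps)
  also have "(Y - X) * (\<Sum>i<c. Y ^ i * X ^ (c - Suc i)) = Y ^ c - X ^ c"
    using power_diff_sumr2[of Y c X] by (simp add: ac_simps)
  also have "M * (X * Y) ^ a * (Y ^ c - X ^ c) = M * X ^ a * Y ^ (a + c) - M * X ^ (a + c) * Y ^ a"
    by (simp add: power_add power_mult_distrib algebra_simps)
  finally show ?thesis .
qed

text \<open>With \<open>a = deg\<^sub>x\<^sub>k m \<le> b = deg\<^sub>x\<^sub>k\<^sub>+\<^sub>1 m\<close> and \<open>c = b - a\<close>, the quotient of \<open>m - s\<^sub>k m\<close> by \<open>x\<^sub>k\<^sub>+\<^sub>1 - x\<^sub>k\<close>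
  is \<open>m' (x\<^sub>k x\<^sub>k\<^sub>+\<^sub>1)\<^sup>a \<Sum>\<^sub>i\<^sub><\<^sub>c x\<^sub>k\<^sup>c\<^sup>-\<^sup>1\<^sup>-\<^sup>i x\<^sub>k\<^sub>+\<^sub>1\<^sup>i\<close>, where \<open>m'\<close> is \<open>m\<close> without \<open>x\<^sub>k, x\<^sub>k\<^sub>+\<^sub>1\<close>; for \<open>a > b\<close> the roles swap
  and the sign changes.\<close>
definition divdiff_mono :: "nat \<Rightarrow> (nat \<Rightarrow>\<^sub>0 nat) \<Rightarrow> 'a::comm_ring_1 mpoly" where
  "divdiff_mono k m = (let a = lookup m k; b = lookup m (Suc k); c = (if a \<le> b then b - a else a - b) in
     (if a \<le> b then 1 else -1) * (\<Sum>i<c. mmon (mono_upd_pair k m (min a b + (c - Suc i)) (min a b + i))))"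

lemma divdiff_mono_eq:
  "(mvar (Suc k) - mvar k) * (divdiff_mono k m :: 'a::comm_ring_1 mpoly) = mmon m - mmon (mono_rename (transpose k (Suc k)) m)"
proof -
  define a where "a = lookup m k"
  define b where "b = lookup m (Suc k)"
  define X where "X = (mvar k :: 'a mpoly)"
  define Y where "Y = (mvar (Suc k) :: 'a mpoly)"
  define M where "M = (mmon (mono_clear k (mono_clear (Suc k) m)) :: 'a mpoly)"
  have "mmon m = M * X ^ a * Y ^ b"
    using mmon_mono_upd_pair[of k m a b] by (simp add: a_def b_def M_def X_def Y_def mono_upd_pair_self)
  moreover have "mmon (mono_rename (transpose k (Suc k)) m) = M * X ^ b * Y ^ a"
    using mmon_mono_upd_pair[of k m b a] by (simp add: a_def b_def M_def X_def Y_def mono_upd_pair_swap)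
  moreover have "(Y - X) * divdiff_mono k m = M * X ^ a * Y ^ b - M * X ^ b * Y ^ a"
  proof (cases "a \<le> b")
    case True
    then obtain c where c: "b = a + c" using le_Suc_ex by blast
    have "divdiff_mono k m = (\<Sum>i<c. M * X ^ (a + (c - Suc i)) * Y ^ (a + i))"
      using True by (simp add: divdiff_mono_def Let_def a_def[symmetric] b_def[symmetric] c mmon_mono_upd_pair M_def X_def Y_def)
    then show ?thesis by (simp only: c diff_mult_sum_monomials)
  next
    case False
    then obtain c where c: "a = b + c" using le_Suc_ex[of b a] by auto
    have "divdiff_mono k m = - (\<Sum>i<c. M * X ^ (b + (c - Suc i)) * Y ^ (b + i))"
      using False by (simp add: divdiff_mono_def Let_def a_def[symmetric] b_def[symmetric] c mmon_mono_upd_pair M_def X_def Y_def)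
    then show ?thesis by (simp only: c mult_minus_right diff_mult_sum_monomials minus_diff_eq)
  qed
  ultimately show ?thesis by (simp add: X_def Y_def)
qed

lemma keys_divdiff_mono: "keys (divdiff_mono k m) \<subseteq> {mono_upd_pair k m \<alpha> \<beta> | \<alpha> \<beta>. \<alpha> < max (lookup m k) (lookup m (Suc k)) \<and> \<beta> < max (lookup m k) (lookup m (Suc k))}"
proof -
  define a where "a = lookup m k"
  define b where "b = lookup m (Suc k)"
  define c where "c = (if a \<le> b then b - a else a - b)"
  have "keys (\<Sum>i<c. mmon (mono_upd_pair k m (min a b + (c - Suc i)) (min a b + i)) :: 'a mpoly)
       \<subseteq> (\<Union>i<c. keys (mmon (mono_upd_pair k m (min a b + (c - Suc i)) (min a b + i)) :: 'a mpoly))"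
    by (rule keys_sum)
  also have "\<dots> \<subseteq> {mono_upd_pair k m \<alpha> \<beta> | \<alpha> \<beta>. \<alpha> < max a b \<and> \<beta> < max a b}"
    by (auto simp: c_def split: if_splits intro!: exI)
  finally have *: "keys (\<Sum>i<c. mmon (mono_upd_pair k m (min a b + (c - Suc i)) (min a b + i)) :: 'a mpoly)
       \<subseteq> {mono_upd_pair k m \<alpha> \<beta> | \<alpha> \<beta>. \<alpha> < max a b \<and> \<beta> < max a b}" .
  show ?thesis
    using * unfolding divdiff_mono_def Let_def a_def[symmetric] b_def[symmetric] c_def[symmetric]
    by (auto simp: a_def b_def)
qed

definition divdiff :: "nat \<Rightarrow> 'a::comm_ring_1 mpoly \<Rightarrow> 'a mpoly" where
  "divdiff k p = lin_ext (divdiff_mono k) p"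

lemma lin_ext_diff_fun: "lin_ext (\<lambda>m. f m - g m) p = lin_ext f p - lin_ext g p"
  by (simp add: lin_ext_def right_diff_distrib sum_subtractf)

lemma divdiff_eq: "(mvar (Suc k) - mvar k) * divdiff k p = p - mrename (transpose k (Suc k)) p"
proof -
  have "(mvar (Suc k) - mvar k) * divdiff k p = lin_ext (\<lambda>m. mmon m - mmon (mono_rename (transpose k (Suc k)) m)) p"
    by (simp add: divdiff_def lin_ext_mult_left divdiff_mono_eq)
  also have "\<dots> = p - mrename (transpose k (Suc k)) p"
    by (simp add: lin_ext_diff_fun lin_ext_mmon mrename_lin_ext)
  finally show ?thesis .
qed

lemma mvar_Suc_diff_nonzero: "(mvar (Suc k) - mvar k :: 'a::comm_ring_1 mpoly) \<noteq> 0"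
proof
  assume "(mvar (Suc k) - mvar k :: 'a mpoly) = 0"
  then have "lookup (mvar (Suc k) - mvar k :: 'a mpoly) (Poly_Mapping.single (Suc k) 1) = 0" by simp
  moreover have "Poly_Mapping.single k (1::nat) \<noteq> Poly_Mapping.single (Suc k) 1"
    by (metis lookup_single_eq lookup_single_not_eq n_not_Suc_n one_neq_zero)
  ultimately show False by (simp add: mvar_def lookup_minus lookup_single when_def)
qed

lemma divdiff_unique:
  fixes p w :: "'a::idom mpoly"
  assumes "(mvar (Suc k) - mvar k) * w = p - mrename (transpose k (Suc k)) p"
  shows "w = divdiff k p"
  using assms divdiff_eq[of k p] mvar_Suc_diff_nonzero[of k] by (metis mult_left_cancel)

lemma divdiff_diff: "divdiff k (p - q) = divdiff k p - divdiff k q" by (simp add: divdiff_def lin_ext_diff)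

lemma divdiff_sum: "divdiff k (sum f A) = (\<Sum>a\<in>A. divdiff k (f a))" by (simp add: divdiff_def lin_ext_sum)

lemma divdiff_mult:
  fixes p q :: "'a::idom mpoly"
  shows "divdiff k (p * q) = divdiff k p * q + mrename (transpose k (Suc k)) p * divdiff k q"
proof (rule divdiff_unique[symmetric])
  show "(mvar (Suc k) - mvar k) * (divdiff k p * q + mrename (transpose k (Suc k)) p * divdiff k q) = p * q - mrename (transpose k (Suc k)) (p * q)"
  proof -
    let ?D = "mvar (Suc k) - mvar k :: 'a mpoly" and ?t = "mrename (transpose k (Suc k))"
    have "?D * (divdiff k p * q + ?t p * divdiff k q) = (?D * divdiff k p) * q + ?t p * (?D * divdiff k q)"
      by (simp add: algebra_simps)
    also have "\<dots> = (p - ?t p) * q + ?t p * (q - ?t q)" by (simp only: divdiff_eq)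
    also have "\<dots> = p * q - ?t p * ?t q" by (simp add: algebra_simps)
    also have "\<dots> = p * q - ?t (p * q)" by (simp add: mrename_mult)
    finally show ?thesis .
  qed
qed

lemma divdiff_eq_0_if_invariant:
  fixes p :: "'a::idom mpoly"
  assumes "mrename (transpose k (Suc k)) p = p"
  shows "divdiff k p = 0"
  using divdiff_unique[of k 0 p] assms by simp

lemma invariant_if_divdiff_eq_0:
  fixes p :: "'a::idom mpoly"
  assumes "divdiff k p = 0"
  shows "mrename (transpose k (Suc k)) p = p"
  using divdiff_eq[of k p] assms by simp

lemma keys_divdiff: "keys (divdiff k (p::'a::comm_ring_1 mpoly)) \<subseteq> (\<Union>m\<in>keys p. keys (divdiff_mono k m :: 'a mpoly))"
  unfolding divdiff_def by (rule keys_lin_ext)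

section \<open>Division by triangular families\<close>

definition monic_in :: "nat \<Rightarrow> nat \<Rightarrow> 'a::comm_ring_1 mpoly \<Rightarrow> bool" where
  "monic_in k e t \<longleftrightarrow> lookup t (Poly_Mapping.single k e) = 1 \<and>
     (\<forall>m\<in>keys t. lookup m k \<le> e \<and> (lookup m k = e \<longrightarrow> m = Poly_Mapping.single k e))"

lemma monic_lead_keys:
  assumes "monic_in k e t"
  shows "Poly_Mapping.single k e \<in> keys t"
  using assms by (simp add: monic_in_def in_keys_iff)

lemma monic_rest:
  assumes "monic_in k e (t::'a::comm_ring_1 mpoly)" "m \<in> keys (t - mmon (Poly_Mapping.single k e))"
  shows "lookup m k < e" "m \<in> keys t"
proof -
  have "lookup (t - mmon (Poly_Mapping.single k e)) m \<noteq> 0" using assms(2) by (simp add: in_keys_iff)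
  then have ne: "m \<noteq> Poly_Mapping.single k e" and mt: "m \<in> keys t"
    using assms(1) by (auto simp: lookup_minus lookup_single monic_in_def in_keys_iff when_def split: if_splits)
  show "m \<in> keys t" by fact
  show "lookup m k < e" using assms(1) ne mt unfolding monic_in_def by force
qed

lemma lookup_mult_monic_top:
  fixes Q t :: "'a::comm_ring_1 mpoly"
  assumes monic: "monic_in k e t" and m0: "m0 \<in> keys Q" and top: "\<And>m. m \<in> keys Q \<Longrightarrow> lookup m k \<le> lookup m0 k"
  shows "lookup (Q * t) (m0 + Poly_Mapping.single k e) = lookup Q m0"
proof -
  let ?L = "Poly_Mapping.single k e" and ?N = "lookup m0 k" and ?T = "m0 + Poly_Mapping.single k e"
  define Qt where "Qt = mfilter (\<lambda>m. lookup m k = ?N) Q"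
  have T: "lookup ?T k = ?N + e" by (simp add: lookup_add)
  have "Q * t = mmon ?L * Qt + Qt * (t - mmon ?L) + (Q - Qt) * t"
    by (simp add: algebra_simps)
  moreover have "lookup (mmon ?L * Qt) ?T = lookup Q m0"
    using lookup_mmon_mult[of ?L Qt m0] by (simp add: add.commute Qt_def lookup_mfilter)
  moreover have "lookup (Qt * (t - mmon ?L)) ?T = 0"
  proof (rule ccontr)
    assume "lookup (Qt * (t - mmon ?L)) ?T \<noteq> 0"
    then obtain a b where "?T = a + b" "a \<in> keys Qt" "b \<in> keys (t - mmon ?L)"
      using keys_mult_sub by (metis in_keys_iff)
    then show False using monic_rest(1)[OF monic] T by (auto simp: Qt_def keys_mfilter lookup_add)
  qed
  moreover have "lookup ((Q - Qt) * t) ?T = 0"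
  proof (rule ccontr)
    assume "lookup ((Q - Qt) * t) ?T \<noteq> 0"
    then obtain a b where ab: "?T = a + b" "a \<in> keys (Q - Qt)" "b \<in> keys t"
      using keys_mult_sub by (metis in_keys_iff)
    have "lookup a k < ?N" using keys_diff_mfilter[of a Q] top ab(2) unfolding Qt_def by force
    moreover have "lookup b k \<le> e" using monic ab(3) by (simp add: monic_in_def)
    ultimately show False using T ab(1) by (simp add: lookup_add)
  qed
  ultimately show ?thesis by (simp add: lookup_add)
qed

lemma ex_key_mult_monic_ge:
  fixes Q t :: "'a::comm_ring_1 mpoly"
  assumes "monic_in k e t" "Q \<noteq> 0"
  shows "\<exists>m\<in>keys (Q * t). e \<le> lookup m k"
proof -
  define N where "N = Max ((\<lambda>m. lookup m k) ` keys Q)"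
  have "N \<in> (\<lambda>m. lookup m k) ` keys Q"
    unfolding N_def using assms(2) by (intro Max_in) auto
  then obtain m0 where m0: "m0 \<in> keys Q" "lookup m0 k = N" by auto
  have top: "lookup m k \<le> lookup m0 k" if "m \<in> keys Q" for m
    unfolding m0(2) N_def using that by (intro Max_ge) auto
  have "lookup (Q * t) (m0 + Poly_Mapping.single k e) \<noteq> 0"
    using lookup_mult_monic_top[OF assms(1) m0(1) top] m0(1) by (simp add: in_keys_iff)
  then show ?thesis by (intro bexI[of _ "m0 + Poly_Mapping.single k e"]) (auto simp: in_keys_iff lookup_add)
qed

lemma mmon_mult_lin_ext_minus:
  assumes "\<And>m. m \<in> keys p \<Longrightarrow> e \<le> lookup m k"
  shows "mmon (Poly_Mapping.single k e) * lin_ext (\<lambda>m. mmon (m - Poly_Mapping.single k e)) p = (p :: 'a::comm_ring_1 mpoly)"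
proof -
  let ?L = "Poly_Mapping.single k e"
  have "mmon ?L * lin_ext (\<lambda>m. mmon (m - ?L)) p = lin_ext (\<lambda>m. mmon ?L * mmon (m - ?L)) p"
    by (rule lin_ext_mult_left)
  also have "\<dots> = lin_ext mmon p"
  proof (rule lin_ext_cong)
    fix m assume "m \<in> keys p"
    then have "?L + (m - ?L) = m" using assms
      by (intro poly_mapping_eqI) (auto simp: lookup_add lookup_minus lookup_single when_def)
    then show "mmon ?L * mmon (m - ?L) = (mmon m :: 'a mpoly)" by (simp add: mult_single)
  qed
  finally show ?thesis by (simp add: lin_ext_mmon)
qed

lemma monic_division_step:
  fixes t :: "'a::comm_ring_1 mpoly"
  assumes monic: "monic_in k e t"
    and clos: "\<And>m m2. m \<in> M \<Longrightarrow> m2 \<in> keys t \<Longrightarrow> e \<le> lookup m k \<Longrightarrow> (m - Poly_Mapping.single k e) + m2 \<in> M"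
    and p: "keys p \<subseteq> M" "\<And>m. m \<in> keys p \<Longrightarrow> lookup m k \<le> N" and eN: "e \<le> N"
  shows "\<exists>q. keys (p - q * t) \<subseteq> M \<and> (\<forall>m\<in>keys (p - q * t). lookup m k < N)"
proof -
  let ?L = "Poly_Mapping.single k e"
  define pt where "pt = mfilter (\<lambda>m. lookup m k = N) p"
  define q where "q = lin_ext (\<lambda>m. mmon (m - ?L)) pt"
  have pt: "m \<in> keys pt \<Longrightarrow> lookup m k = N \<and> m \<in> keys p" for m
    by (auto simp: pt_def keys_mfilter)
  have "mmon ?L * q = pt"
    unfolding q_def using pt eN by (intro mmon_mult_lin_ext_minus) auto
  then have p_rest: "p - q * t = (p - pt) - q * (t - mmon ?L)"
    by (simp add: algebra_simps)
  have "x \<in> M \<and> lookup x k < N" if x: "x \<in> keys (p - q * t)" for x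
  proof -
    have "x \<in> keys (p - pt) \<or> x \<in> keys (q * (t - mmon ?L))"
      using x keys_diff[of "p - pt" "q * (t - mmon ?L)"] by (auto simp: p_rest)
    then show ?thesis
    proof
      assume "x \<in> keys (p - pt)"
      then show ?thesis using keys_diff_mfilter[of x p] p unfolding pt_def by force
    next
      assume "x \<in> keys (q * (t - mmon ?L))"
      then obtain a b where ab: "x = a + b" "a \<in> keys q" "b \<in> keys (t - mmon ?L)"
        using keys_mult_sub by blast
      obtain m where m: "m \<in> keys pt" "a = m - ?L"
        using keys_lin_ext[of "\<lambda>m. mmon (m - ?L)" pt] ab(2) by (auto simp: q_def)
      have b: "lookup b k < e" "b \<in> keys t" using monic_rest[OF monic ab(3)] by auto
      have "x \<in> M" using clos[of m b] pt[OF m(1)] p(1) b eN ab(1) m(2) by auto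
      moreover have "lookup x k < N" using ab(1) m(2) pt[OF m(1)] b eN by (simp add: lookup_add lookup_minus)
      ultimately show ?thesis by blast
    qed
  qed
  then show ?thesis by blast
qed

lemma monic_division:
  fixes t :: "'a::comm_ring_1 mpoly"
  assumes monic: "monic_in k e t"
    and clos: "\<And>m m2. m \<in> M \<Longrightarrow> m2 \<in> keys t \<Longrightarrow> e \<le> lookup m k \<Longrightarrow> (m - Poly_Mapping.single k e) + m2 \<in> M"
    and pM: "keys p \<subseteq> M"
  shows "\<exists>a b. p = a * t + b \<and> keys b \<subseteq> M \<and> (\<forall>m\<in>keys b. lookup m k < e)"
proof -
  have "\<forall>p. keys p \<subseteq> M \<longrightarrow> (\<forall>m\<in>keys p. lookup m k < N) \<longrightarrow>
          (\<exists>a b. p = a * t + b \<and> keys b \<subseteq> M \<and> (\<forall>m\<in>keys b. lookup m k < e))" for N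
  proof (induction N)
    case 0
    then show ?case by (intro allI impI exI[of _ 0]) auto
  next
    case (Suc N)
    show ?case
    proof (intro allI impI)
      fix p :: "'a mpoly"
      assume pM: "keys p \<subseteq> M" and pN: "\<forall>m\<in>keys p. lookup m k < Suc N"
      show "\<exists>a b. p = a * t + b \<and> keys b \<subseteq> M \<and> (\<forall>m\<in>keys b. lookup m k < e)"
      proof (cases "N < e")
        case True
        then show ?thesis using pM pN by (intro exI[of _ 0] exI[of _ p]) auto
      next
        case False
        then obtain q where "keys (p - q * t) \<subseteq> M" "\<forall>m\<in>keys (p - q * t). lookup m k < N"
          using monic_division_step[OF monic clos pM, of N] pN by fastforce
        then obtain a b where "p - q * t = a * t + b" "keys b \<subseteq> M" "\<forall>m\<in>keys b. lookup m k < e"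
          using Suc.IH by blast
        then show ?thesis by (intro exI[of _ "q + a"] exI[of _ b]) (simp add: algebra_simps)
      qed
    qed
  qed
  moreover have "\<forall>m\<in>keys p. lookup m k < Suc (Max ((\<lambda>m. lookup m k) ` keys p))"
    by (simp add: le_imp_less_Suc)
  ultimately show ?thesis using pM by blast
qed

text \<open>The leading monomial of the \<open>k\<close>-th member of a triangular family is \<open>x\<^sub>k ^ e k\<close>
  (\<open>lead_mono_eq\<close> below), so \<open>reduced n e\<close> describes the normal forms modulo the family.\<close>
definition triangular :: "nat \<Rightarrow> (nat \<Rightarrow> 'a::comm_ring_1 mpoly) \<Rightarrow> (nat \<Rightarrow> nat) \<Rightarrow> bool" where
  "triangular n t e \<longleftrightarrow> (\<forall>k<n. monic_in k (e k) (t k) \<and> (\<forall>m\<in>keys (t k). keys m \<subseteq> {..k}))"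

definition gen_ideal :: "nat \<Rightarrow> (nat \<Rightarrow> 'a::comm_ring_1 mpoly) \<Rightarrow> 'a mpoly set" where
  "gen_ideal n t = {p. \<exists>c. p = (\<Sum>k<n. c k * t k)}"

definition reduced :: "nat \<Rightarrow> (nat \<Rightarrow> nat) \<Rightarrow> 'a::comm_ring_1 mpoly \<Rightarrow> bool" where
  "reduced n e p \<longleftrightarrow> (\<forall>m\<in>keys p. keys m \<subseteq> {..<n} \<and> (\<forall>k<n. lookup m k < e k))"

lemma gen_ideal_0[simp]: "0 \<in> gen_ideal n t"
  unfolding gen_ideal_def by (auto intro!: exI[of _ "\<lambda>_. 0"])

lemma gen_ideal_add:
  assumes "p \<in> gen_ideal n t" "q \<in> gen_ideal n t" shows "p + q \<in> gen_ideal n t"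
proof -
  obtain c c' where "p = (\<Sum>k<n. c k * t k)" "q = (\<Sum>k<n. c' k * t k)" using assms by (auto simp: gen_ideal_def)
  then have "p + q = (\<Sum>k<n. (c k + c' k) * t k)" by (simp add: sum.distrib distrib_right)
  then show ?thesis unfolding gen_ideal_def mem_Collect_eq by (rule exI[where x="\<lambda>k. c k + c' k"])
qed

lemma gen_ideal_mult:
  assumes "p \<in> gen_ideal n t" shows "a * p \<in> gen_ideal n t"
proof -
  obtain c where "p = (\<Sum>k<n. c k * t k)" using assms by (auto simp: gen_ideal_def)
  then have "a * p = (\<Sum>k<n. (a * c k) * t k)" by (simp add: sum_distrib_left mult.assoc)
  then show ?thesis unfolding gen_ideal_def mem_Collect_eq by (rule exI[where x="\<lambda>k. a * c k"])
qed

lemma gen_ideal_uminus: "p \<in> gen_ideal n t \<Longrightarrow> - p \<in> gen_ideal n t"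
  using gen_ideal_mult[of p n t "-1"] by simp

lemma gen_ideal_diff: "p \<in> gen_ideal n t \<Longrightarrow> q \<in> gen_ideal n t \<Longrightarrow> p - q \<in> gen_ideal n t"
  using gen_ideal_add[of p n t "-q"] gen_ideal_uminus[of q n t] by simp

lemma gen_ideal_gen: assumes k: "k < n" shows "t k \<in> gen_ideal n t"
proof -
  have "(\<Sum>j<n. (if j = k then 1 else 0) * t j) = (\<Sum>j<n. if j = k then t j else 0)"
    by (rule sum.cong) simp_all
  also have "\<dots> = t k" using k by simp
  finally have "t k = (\<Sum>j<n. (\<lambda>j. if j = k then 1 else 0) j * t j)" by simp
  then show ?thesis unfolding gen_ideal_def mem_Collect_eq by (rule exI[where x="\<lambda>j. if j = k then 1 else 0"])
qed

lemma gen_ideal_sum: "(\<And>a. a \<in> A \<Longrightarrow> f a \<in> gen_ideal n t) \<Longrightarrow> sum f A \<in> gen_ideal n t"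
  by (induction A rule: infinite_finite_induct) (auto intro: gen_ideal_add)

lemma triangular_Suc: "triangular (Suc n) t e \<Longrightarrow> triangular n t e"
  by (simp add: triangular_def)

definition var_coeff :: "nat \<Rightarrow> nat \<Rightarrow> 'a::comm_ring_1 mpoly \<Rightarrow> 'a mpoly" where
  "var_coeff n j p = lin_ext (\<lambda>m. if lookup m n = j then mmon (mono_clear n m) else 0) p"

lemma var_coeff_add: "var_coeff n j (p + q) = var_coeff n j p + var_coeff n j q" by (simp add: var_coeff_def lin_ext_add)

lemma var_coeff_sum: "var_coeff n j (sum f A) = (\<Sum>a\<in>A. var_coeff n j (f a))" by (simp add: var_coeff_def lin_ext_sum)

lemma var_coeff_single: "var_coeff n j (Poly_Mapping.single m c) = (if lookup m n = j then Poly_Mapping.single (mono_clear n m) c else 0)"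
  by (simp add: var_coeff_def lin_ext_single mconst_mult_single)

lemma var_coeff_mult_free:
  fixes s :: "'a::comm_ring_1 mpoly"
  assumes s: "\<forall>m\<in>keys s. lookup m n = 0"
  shows "var_coeff n j (b * s) = var_coeff n j b * s"
proof -
  have sexp: "s = (\<Sum>m2\<in>keys s. Poly_Mapping.single m2 (lookup s m2))"
    using lin_ext_mmon[of s] by (simp add: lin_ext_def mconst_mult_single)
  have single_case: "var_coeff n j (Poly_Mapping.single m c * s) = var_coeff n j (Poly_Mapping.single m c) * s" for m c
  proof -
    have "var_coeff n j (Poly_Mapping.single m c * s) = (\<Sum>m2\<in>keys s. var_coeff n j (Poly_Mapping.single (m + m2) (c * lookup s m2)))"
      by (subst sexp) (simp add: sum_distrib_left var_coeff_sum mult_single)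
    also have "\<dots> = (\<Sum>m2\<in>keys s. var_coeff n j (Poly_Mapping.single m c) * Poly_Mapping.single m2 (lookup s m2))"
    proof (rule sum.cong[OF refl])
      fix m2 assume "m2 \<in> keys s"
      then have z: "lookup m2 n = 0" using s by blast
      have "mono_clear n (m + m2) = mono_clear n m + m2"
        by (rule poly_mapping_eqI) (simp add: lookup_mono_clear lookup_add z)
      then show "var_coeff n j (Poly_Mapping.single (m + m2) (c * lookup s m2)) = var_coeff n j (Poly_Mapping.single m c) * Poly_Mapping.single m2 (lookup s m2)"
        by (simp add: var_coeff_single lookup_add z mult_single)
    qed
    also have "\<dots> = var_coeff n j (Poly_Mapping.single m c) * s"
      by (subst (2) sexp) (simp add: sum_distrib_left)
    finally show ?thesis .
  qed
  show ?thesis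
  proof (rule additive_eqI[of "\<lambda>b. var_coeff n j (b * s)" "\<lambda>b. var_coeff n j b * s"])
    fix p q :: "'a mpoly"
    show "var_coeff n j ((p + q) * s) = var_coeff n j (p * s) + var_coeff n j (q * s)" by (simp only: distrib_right var_coeff_add)
    show "var_coeff n j (p + q) * s = var_coeff n j p * s + var_coeff n j q * s" by (simp only: distrib_right var_coeff_add)
  next
    fix m c show "var_coeff n j (Poly_Mapping.single m c * s) = var_coeff n j (Poly_Mapping.single m c) * s"
      by (rule single_case)
  qed
qed

lemma lookup_var_coeff_mono_clear:
  assumes "lookup m n = j"
  shows "lookup (var_coeff n j p) (mono_clear n m) = lookup p m"
proof -
  have eq: "(lookup m' n = j \<and> mono_clear n m' = mono_clear n m) \<longleftrightarrow> m' = m" for m'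
  proof
    assume a: "lookup m' n = j \<and> mono_clear n m' = mono_clear n m"
    show "m' = m"
    proof (rule poly_mapping_eqI)
      fix l
      have "lookup (mono_clear n m') l = lookup (mono_clear n m) l" using a by simp
      then have "(if l = n then 0 else lookup m' l) = (if l = n then 0 else lookup m l)" by (simp only: lookup_mono_clear)
      then show "lookup m' l = lookup m l"
        using a assms by (cases "l = n") auto
    qed
  qed (use assms in auto)
  have "lookup (var_coeff n j p) (mono_clear n m) = (\<Sum>m'\<in>keys p. if m' = m then lookup p m' else 0)"
    unfolding var_coeff_def lin_ext_def lookup_sum
    by (intro sum.cong refl) (auto simp: mconst_mult_single lookup_single when_def eq[symmetric])
  also have "\<dots> = lookup p m" by (auto simp: in_keys_iff)
  finally show ?thesis .
qed

lemma keys_var_coeff: "keys (var_coeff n j p) \<subseteq> mono_clear n ` keys p"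
  using keys_lin_ext[of "\<lambda>m. if lookup m n = j then mmon (mono_clear n m) else 0" p]
  unfolding var_coeff_def by (auto split: if_splits)

lemma triangular_lookup_above_eq_0:
  assumes "triangular n t e" "k < n" "m \<in> keys (t k)" "k < l"
  shows "lookup m l = 0"
  using assms by (fastforce simp: triangular_def in_keys_iff)

text \<open>Dividing all coefficients by the monic \<open>t\<^sub>n\<close> leaves a multiple \<open>Q t\<^sub>n\<close> of \<open>x\<^sub>n\<close>-degree
  below \<open>e\<^sub>n\<close>, which forces \<open>Q = 0\<close>.\<close>
lemma reduced_in_gen_ideal_Suc:
  fixes t :: "nat \<Rightarrow> 'a::comm_ring_1 mpoly"
  assumes tri: "triangular (Suc n) t e" and r: "reduced (Suc n) e r" "r \<in> gen_ideal (Suc n) t"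
  shows "r \<in> gen_ideal n t"
proof -
  have monic: "monic_in n (e n) (t n)" using tri by (simp add: triangular_def)
  obtain c where c: "r = (\<Sum>k<Suc n. c k * t k)" using r(2) by (auto simp: gen_ideal_def)
  have "\<forall>k. \<exists>a b. c k = a * t n + b \<and> (\<forall>m\<in>keys b. lookup m n < e n)"
    using monic_division[OF monic, of UNIV] by blast
  then obtain a b where ab: "\<And>k. c k = a k * t n + b k" "\<And>k m. m \<in> keys (b k) \<Longrightarrow> lookup m n < e n"
    by metis
  define Q where "Q = c n + (\<Sum>k<n. a k * t k)"
  define r' where "r' = (\<Sum>k<n. b k * t k)"
  have "(\<Sum>k<n. c k * t k) = (\<Sum>k<n. b k * t k + (a k * t k) * t n)"
    by (intro sum.cong refl) (simp add: ab(1) algebra_simps)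
  also have "\<dots> = r' + (\<Sum>k<n. a k * t k) * t n"
    by (simp add: sum.distrib sum_distrib_right r'_def)
  finally have r_eq: "r = r' + Q * t n"
    by (simp add: c Q_def algebra_simps)
  have r'_low: "lookup m n < e n" if m: "m \<in> keys r'" for m
  proof -
    obtain k where k: "k < n" "m \<in> keys (b k * t k)"
      using m keys_sum[of "\<lambda>k. b k * t k" "{..<n}"] by (auto simp: r'_def)
    then obtain x y where "m = x + y" "x \<in> keys (b k)" "y \<in> keys (t k)"
      using keys_mult_sub by blast
    then show ?thesis
      using ab(2) triangular_lookup_above_eq_0[OF tri, of k y n] k(1) by (simp add: lookup_add)
  qed
  have "Q = 0"
  proof (rule ccontr)
    assume "Q \<noteq> 0"
    then obtain m where m: "m \<in> keys (Q * t n)" "e n \<le> lookup m n"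
      using ex_key_mult_monic_ge[OF monic] by blast
    have "Q * t n = r - r'" using r_eq by simp
    then have "m \<in> keys r \<or> m \<in> keys r'" using m(1) keys_diff[of r r'] by auto
    then show False using r(1) r'_low m(2) unfolding reduced_def by fastforce
  qed
  then show ?thesis using r_eq unfolding r'_def gen_ideal_def by auto
qed

lemma var_coeff_in_gen_ideal:
  assumes free: "\<And>k m. k < n \<Longrightarrow> m \<in> keys (t k) \<Longrightarrow> lookup m n = 0"
    and p: "p \<in> gen_ideal n t"
  shows "var_coeff n j p \<in> gen_ideal n t"
proof -
  obtain b where "p = (\<Sum>k<n. b k * t k)" using p by (auto simp: gen_ideal_def)
  then have "var_coeff n j p = (\<Sum>k<n. var_coeff n j (b k) * t k)"
    by (auto simp: var_coeff_sum free intro!: sum.cong var_coeff_mult_free)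
  then show ?thesis unfolding gen_ideal_def mem_Collect_eq by (rule exI[where x = "\<lambda>k. var_coeff n j (b k)"])
qed

lemma reduced_var_coeff:
  assumes "reduced (Suc n) e r"
  shows "reduced n e (var_coeff n j r)"
  unfolding reduced_def
proof
  fix m assume "m \<in> keys (var_coeff n j r)"
  then obtain m0 where m0: "m0 \<in> keys r" "m = mono_clear n m0" using keys_var_coeff by blast
  then have m0_vars: "keys m0 \<subseteq> {..<Suc n}" and m0_exps: "\<forall>k<Suc n. lookup m0 k < e k"
    using assms unfolding reduced_def by blast+
  have "keys m \<subseteq> keys m0 - {n}"
    by (auto simp: m0(2) in_keys_iff lookup_mono_clear split: if_splits)
  with m0_vars have "keys m \<subseteq> {..<n}" by (simp add: lessThan_Suc) blast
  moreover have "\<forall>k<n. lookup m k < e k" using m0_exps by (simp add: m0(2) lookup_mono_clear)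
  ultimately show "keys m \<subseteq> {..<n} \<and> (\<forall>k<n. lookup m k < e k)" by blast
qed

lemma var_coeff_eq_0_imp_eq_0:
  assumes "\<And>j. var_coeff n j p = 0"
  shows "p = 0"
proof (rule ccontr)
  assume "p \<noteq> 0"
  then obtain m where "m \<in> keys p" by fastforce
  then have "lookup (var_coeff n (lookup m n) p) (mono_clear n m) \<noteq> 0"
    by (simp add: lookup_var_coeff_mono_clear in_keys_iff)
  then show False using assms by simp
qed

theorem reduced_in_gen_ideal_eq_0:
  fixes t :: "nat \<Rightarrow> 'a::comm_ring_1 mpoly"
  assumes "triangular n t e" "reduced n e r" "r \<in> gen_ideal n t"
  shows "r = 0"
  using assms
proof (induction n arbitrary: r)
  case 0
  then show ?case by (simp add: gen_ideal_def)
next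
  case (Suc n)
  have free: "lookup m n = 0" if "k < n" "m \<in> keys (t k)" for k m
    using triangular_lookup_above_eq_0[OF Suc.prems(1), of k m n] that by simp
  have "r \<in> gen_ideal n t" using Suc.prems by (rule reduced_in_gen_ideal_Suc)
  then have "var_coeff n j r \<in> gen_ideal n t" for j
    using free by (rule var_coeff_in_gen_ideal[rotated])
  then have "var_coeff n j r = 0" for j
    using Suc.IH triangular_Suc[OF Suc.prems(1)] reduced_var_coeff[OF Suc.prems(2)] by blast
  then show "r = 0" by (rule var_coeff_eq_0_imp_eq_0)
qed

definition reduced_above :: "nat \<Rightarrow> (nat \<Rightarrow> nat) \<Rightarrow> nat \<Rightarrow> (nat \<Rightarrow>\<^sub>0 nat) set" where
  "reduced_above n e k = {m. keys m \<subseteq> {..<n} \<and> (\<forall>j. k \<le> j \<longrightarrow> j < n \<longrightarrow> lookup m j < e j)}"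

lemma reduced_above_division_closed:
  assumes tri: "triangular n t e" and k: "k < n"
    and m: "m \<in> reduced_above n e (Suc k)" and m2: "m2 \<in> keys (t k)"
  shows "(m - Poly_Mapping.single k (e k)) + m2 \<in> reduced_above n e (Suc k)"
proof -
  have m2_vars: "keys m2 \<subseteq> {..k}" using tri k m2 by (simp add: triangular_def)
  then have m2_above: "lookup m2 j = 0" if "k < j" for j using that by (auto simp: in_keys_iff)
  have "keys ((m - Poly_Mapping.single k (e k)) + m2) \<subseteq> keys m \<union> keys m2"
    by (auto simp: in_keys_iff lookup_add lookup_minus)
  moreover have "{..k} \<subseteq> {..<n}" using k by auto
  ultimately have "keys ((m - Poly_Mapping.single k (e k)) + m2) \<subseteq> {..<n}"
    using m m2_vars unfolding reduced_above_def by blast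
  moreover have "lookup ((m - Poly_Mapping.single k (e k)) + m2) j < e j" if "Suc k \<le> j" "j < n" for j
    using m m2_above that by (simp add: reduced_above_def lookup_add lookup_minus lookup_single)
  ultimately show ?thesis by (simp add: reduced_above_def)
qed

text \<open>Division by \<open>t\<^sub>n\<^sub>-\<^sub>1, \<dots>, t\<^sub>0\<close> in turn: dividing by \<open>t\<^sub>k\<close> brings the \<open>x\<^sub>k\<close>-degree below \<open>e\<^sub>k\<close>
  without spoiling the bounds already achieved for the later variables, because \<open>t\<^sub>k\<close> involves
  only \<open>x\<^sub>0, \<dots>, x\<^sub>k\<close>.\<close>
theorem reduced_remainder_exists:
  fixes t :: "nat \<Rightarrow> 'a::comm_ring_1 mpoly"
  assumes tri: "triangular n t e" and p: "\<forall>m\<in>keys p. keys m \<subseteq> {..<n}"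
  shows "\<exists>r. reduced n e r \<and> p - r \<in> gen_ideal n t"
proof -
  have "\<exists>r. p - r \<in> gen_ideal n t \<and> keys r \<subseteq> reduced_above n e (n - i)" if "i \<le> n" for i
    using that
  proof (induction i)
    case 0
    show ?case using p by (intro exI[of _ p]) (auto simp: reduced_above_def)
  next
    case (Suc i)
    define k where "k = n - Suc i"
    have k: "k < n" "n - i = Suc k" using Suc.prems by (auto simp: k_def)
    obtain r where r: "p - r \<in> gen_ideal n t" "keys r \<subseteq> reduced_above n e (Suc k)"
      using Suc k by auto
    have monic: "monic_in k (e k) (t k)" using tri k(1) by (simp add: triangular_def)
    obtain a b where ab: "r = a * t k + b" "keys b \<subseteq> reduced_above n e (Suc k)" "\<forall>m\<in>keys b. lookup m k < e k"
      using monic_division[OF monic, of "reduced_above n e (Suc k)" r]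
        reduced_above_division_closed[OF tri k(1)] r(2) by blast
    have "p - b = (p - r) + a * t k" using ab(1) by simp
    then have "p - b \<in> gen_ideal n t" using r(1) gen_ideal_add gen_ideal_mult gen_ideal_gen[OF k(1)] by metis
    moreover have "keys b \<subseteq> reduced_above n e k"
    proof
      fix m assume "m \<in> keys b"
      then have m: "m \<in> reduced_above n e (Suc k)" "lookup m k < e k" using ab(2,3) by auto
      have "lookup m j < e j" if "k \<le> j" "j < n" for j
      proof (cases "j = k")
        case True
        then show ?thesis using m(2) by simp
      next
        case False
        then show ?thesis using m(1) that by (simp add: reduced_above_def)
      qed
      then show "m \<in> reduced_above n e k" using m(1) by (simp add: reduced_above_def)
    qed
    ultimately show ?case by (auto simp: k_def)
  qed
  from this[of n] show ?thesis by (auto simp: reduced_def reduced_above_def)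
qed

lemma lex_less_asym: "lex_less a b \<Longrightarrow> lex_less b a \<Longrightarrow> False"
  unfolding lex_less_def by (metis less_asym linorder_neqE_nat)

lemma lead_mono_eq:
  assumes "monic_in k e t" "\<forall>m\<in>keys t. keys m \<subseteq> {..k}"
  shows "lead_mono t = Poly_Mapping.single k e"
  unfolding lead_mono_def
proof (rule the_equality)
  let ?L = "Poly_Mapping.single k e"
  have Lk: "?L \<in> keys t" using monic_lead_keys[OF assms(1)] .
  have lexL: "lex_less m' ?L" if "m' \<in> keys t" "m' \<noteq> ?L" for m'
  proof -
    have "lookup m' k \<le> e" "lookup m' k = e \<longrightarrow> m' = ?L" using assms(1) that(1) by (auto simp: monic_in_def)
    then have "lookup m' k < lookup ?L k" using that(2) by simp
    moreover have "\<forall>j>k. lookup m' j = lookup ?L j"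
    proof (intro allI impI)
      fix j assume "j > k"
      then have "j \<notin> keys m'" using assms(2) that(1) by fastforce
      then show "lookup m' j = lookup ?L j" using \<open>j > k\<close> by (simp add: in_keys_iff lookup_single)
    qed
    ultimately show ?thesis unfolding lex_less_def by blast
  qed
  show "?L \<in> keys t \<and> (\<forall>m'\<in>keys t. m' \<noteq> ?L \<longrightarrow> lex_less m' ?L)" using Lk lexL by blast
  fix m assume m: "m \<in> keys t \<and> (\<forall>m'\<in>keys t. m' \<noteq> m \<longrightarrow> lex_less m' m)"
  show "m = ?L"
  proof (rule ccontr)
    assume ne: "m \<noteq> ?L"
    then have "?L \<noteq> m" by simp
    then have "lex_less ?L m" using m Lk by blast
    moreover have "lex_less m ?L" using lexL m ne by blast
    ultimately show False by (rule lex_less_asym)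
  qed
qed

lemma mono_dvd_single: "mono_dvd (Poly_Mapping.single k e) m \<longleftrightarrow> e \<le> lookup m k"
  unfolding mono_dvd_def by (auto simp: lookup_single when_def)

lemma mideal_image_eq_gen_ideal:
  assumes "inj_on t {..<n}"
  shows "mideal (t ` {..<n}) = gen_ideal n t"
proof (intro equalityI subsetI)
  fix p assume "p \<in> mideal (t ` {..<n})"
  then obtain c where c: "p = (\<Sum>g\<in>t ` {..<n}. c g * g)" by (auto simp: mideal_def)
  also have "\<dots> = (\<Sum>k<n. c (t k) * t k)" using assms by (simp add: sum.reindex)
  finally show "p \<in> gen_ideal n t" unfolding gen_ideal_def mem_Collect_eq by (rule exI[where x="\<lambda>k. c (t k)"])
next
  fix p assume "p \<in> gen_ideal n t"
  then obtain c where c: "p = (\<Sum>k<n. c k * t k)" by (auto simp: gen_ideal_def)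
  define c' where "c' g = c (the_inv_into {..<n} t g)" for g
  have "(\<Sum>g\<in>t ` {..<n}. c' g * g) = (\<Sum>k<n. c' (t k) * t k)" using assms by (simp add: sum.reindex)
  also have "\<dots> = p" unfolding c c'_def using assms by (intro sum.cong refl) (simp add: the_inv_into_f_f)
  finally show "p \<in> mideal (t ` {..<n})" unfolding mideal_def by blast
qed

lemma reduced_iff:
  assumes "triangular n t e"
  shows "(mvars r \<subseteq> {..<n} \<and> (\<forall>m\<in>keys r. \<forall>g\<in>t ` {..<n}. \<not> mono_dvd (lead_mono g) m)) \<longleftrightarrow> reduced n e r"
proof -
  have lm: "k < n \<Longrightarrow> lead_mono (t k) = Poly_Mapping.single k (e k)" for k
    using assms by (intro lead_mono_eq) (auto simp: triangular_def)
  have "mvars r \<subseteq> {..<n} \<longleftrightarrow> (\<forall>m\<in>keys r. keys m \<subseteq> {..<n})" by (auto simp: mvars_def)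
  moreover have "(\<forall>m\<in>keys r. \<forall>g\<in>t ` {..<n}. \<not> mono_dvd (lead_mono g) m) \<longleftrightarrow> (\<forall>m\<in>keys r. \<forall>k<n. lookup m k < e k)"
    using lm by (auto simp: mono_dvd_single not_le)
  ultimately show ?thesis by (auto simp: reduced_def)
qed

lemma triangular_inj_on:
  assumes "triangular n t e" "\<And>k. k < n \<Longrightarrow> 0 < e k"
  shows "inj_on t {..<n}"
proof (rule inj_onI)
  fix i j assume ij: "i \<in> {..<n}" "j \<in> {..<n}" "t i = t j"
  have "lead_mono (t i) = Poly_Mapping.single i (e i)"
    using assms(1) ij(1) by (intro lead_mono_eq) (auto simp: triangular_def)
  moreover have "lead_mono (t j) = Poly_Mapping.single j (e j)"
    using assms(1) ij(2) by (intro lead_mono_eq) (auto simp: triangular_def)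
  ultimately have "Poly_Mapping.single i (e i) = Poly_Mapping.single j (e j)" using ij(3) by simp
  then have "e i = (if i = j then e j else 0)"
    by (metis lookup_single_eq lookup_single_not_eq)
  moreover have "0 < e i" using assms(2) ij(1) by simp
  ultimately show "i = j" by (metis less_irrefl)
qed

theorem normal_form_eqI:
  fixes t :: "nat \<Rightarrow> 'a::comm_ring_1 mpoly"
  assumes triangular: "triangular n t e" and e: "\<And>k. k < n \<Longrightarrow> 0 < e k"
    and r: "reduced n e r" "h - r \<in> gen_ideal n t"
  shows "normal_form n (t ` {..<n}) h = r"
proof -
  have "mideal (t ` {..<n}) = gen_ideal n t"
    using triangular e by (intro mideal_image_eq_gen_ideal triangular_inj_on)
  then have nf: "normal_form n (t ` {..<n}) h = (THE p. reduced n e p \<and> h - p \<in> gen_ideal n t)"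
    unfolding normal_form_def
    by (intro arg_cong[where f = The] ext) (auto simp: reduced_iff[OF triangular, symmetric])
  show ?thesis
    unfolding nf
  proof (rule the_equality)
    show "reduced n e r \<and> h - r \<in> gen_ideal n t" using r by blast
    fix r' assume r': "reduced n e r' \<and> h - r' \<in> gen_ideal n t"
    then have "r - r' \<in> gen_ideal n t"
      using gen_ideal_diff[of "h - r'" n t "h - r"] r(2) by simp
    moreover have "reduced n e (r - r')"
      using r(1) r' keys_diff[of r r'] unfolding reduced_def by blast
    ultimately have "r - r' = 0" using reduced_in_gen_ideal_eq_0[OF triangular] by blast
    then show "r' = r" by simp
  qed
qed

section \<open>The bases G and F\<close>

lemma herm_gs_monic_in:
  fixes f :: "'a::comm_ring_1 poly"
  assumes "finite S" "k \<in> S" "card S \<le> degree f" "lead_coeff f = 1"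
  shows "monic_in k (degree f + 1 - card S) (herm_gs f S)"
  unfolding monic_in_def
proof (intro conjI ballI)
  show "lookup (herm_gs f S) (Poly_Mapping.single k (degree f + 1 - card S)) = 1"
    using assms by (rule lookup_herm_gs_top)
  fix m assume "m \<in> keys (herm_gs f S)"
  then have deg: "mono_degree m \<le> degree f + 1 - card S" by (rule keys_herm_gs(2))
  have le: "lookup m k \<le> mono_degree m" by (rule lookup_le_mono_degree)
  with deg show "lookup m k \<le> degree f + 1 - card S" by linarith
  show "lookup m k = degree f + 1 - card S \<longrightarrow> m = Poly_Mapping.single k (degree f + 1 - card S)"
  proof
    assume top: "lookup m k = degree f + 1 - card S"
    with le deg have "lookup m k = mono_degree m" by linarith
    then have "m = Poly_Mapping.single k (mono_degree m)" by (rule mono_degree_eq_lookup_imp_single)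
    with top \<open>lookup m k = mono_degree m\<close> show "m = Poly_Mapping.single k (degree f + 1 - card S)" by simp
  qed
qed

lemma herm_G_eq_image: "herm_G f n = (\<lambda>k. herm_gs f {..k}) ` {..<n}"
proof -
  have "{1..n} = Suc ` {..<n}" by (simp add: image_Suc_lessThan)
  then show ?thesis
    by (simp add: herm_G_def image_image herm_g_eq_herm_gs lessThan_Suc_atMost)
qed

lemma triangular_herm_gs:
  fixes f :: "'a::comm_ring_1 poly"
  assumes "n \<le> degree f" "lead_coeff f = 1"
  shows "triangular n (\<lambda>k. herm_gs f {..k}) (\<lambda>k. degree f - k)"
  unfolding triangular_def
proof (intro allI impI conjI)
  fix k assume "k < n"
  then have "card {..k} \<le> degree f" using assms(1) by simp
  then show "monic_in k (degree f - k) (herm_gs f {..k})"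
    and "\<forall>m\<in>keys (herm_gs f {..k}). keys m \<subseteq> {..k}"
    using herm_gs_monic_in[of "{..k}" k f] keys_herm_gs(1)[of _ f "{..k}"] assms(2) by auto
qed

lemma triangular_upoly_at:
  fixes f :: "'a::comm_ring_1 poly"
  assumes "0 < degree f" "lead_coeff f = 1"
  shows "triangular n (upoly_at f) (\<lambda>_. degree f)"
  unfolding triangular_def
proof (intro allI impI conjI)
  fix k
  show "monic_in k (degree f) (upoly_at f k)" and "\<forall>m\<in>keys (upoly_at f k). keys m \<subseteq> {..k}"
    using herm_gs_monic_in[of "{k}" k f] keys_herm_gs(1)[of _ f "{k}"] assms by (auto simp: herm_gs_single)
qed

section \<open>Vandermonde products\<close>

definition vandermonde_on :: "nat set \<Rightarrow> 'a::comm_ring_1 mpoly" where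
  "vandermonde_on S = (\<Prod>(i, j)\<in>{(i, j). i \<in> S \<and> j \<in> S \<and> i < j}. mvar j - mvar i)"

lemma finite_pairs: "finite S \<Longrightarrow> finite {(i, j). i \<in> S \<and> j \<in> S \<and> (i::nat) < j}"
  by (rule finite_subset[of _ "S \<times> S"]) auto

lemma vandermonde_on_dvd:
  assumes "finite S" "{(i, j). i \<in> S' \<and> j \<in> S' \<and> i < j} \<subseteq> B" "B \<subseteq> {(i, j). i \<in> S \<and> j \<in> S \<and> (i::nat) < j}"
  shows "\<exists>q. (\<Prod>(i, j)\<in>B. mvar j - mvar i) = q * (vandermonde_on S' :: 'a::comm_ring_1 mpoly)"
proof -
  have fB: "finite B" using finite_subset[OF assms(3) finite_pairs[OF assms(1)]] .
  show ?thesis unfolding vandermonde_on_def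
    using prod.subset_diff[OF assms(2) fB, of "\<lambda>(i, j). mvar j - mvar i :: 'a mpoly"] by blast
qed

lemma vandermonde_on_dvd_subset:
  assumes "finite S" "S' \<subseteq> S"
  shows "\<exists>q. vandermonde_on S = q * (vandermonde_on S' :: 'a::comm_ring_1 mpoly)"
  using vandermonde_on_dvd[OF assms(1) _ order.refl, of S'] assms(2) by (auto simp: vandermonde_on_def)

lemma vandermonde_eq_vandermonde_on: "vandermonde n = vandermonde_on {..<n}"
proof -
  have "{(i, j). i < j \<and> j < n} = {(i, j). i \<in> {..<n} \<and> j \<in> {..<n} \<and> i < j}" by auto
  then show ?thesis by (simp add: vandermonde_def vandermonde_on_def)
qed

lemma vandermonde_on_insert2:
  assumes "finite T" "a \<notin> T" "b \<notin> T" "b < a"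
  obtains R q\<^sub>a q\<^sub>b :: "'a::comm_ring_1 mpoly"
  where "vandermonde_on (insert a (insert b T)) = (mvar a - mvar b) * R"
    and "R = q\<^sub>a * vandermonde_on (insert a T)" and "R = q\<^sub>b * vandermonde_on (insert b T)"
proof -
  let ?S = "insert a (insert b T)"
  define P where "P = {(i, j). i \<in> ?S \<and> j \<in> ?S \<and> (i::nat) < j}"
  define R where "R = (\<Prod>(i, j)\<in>P - {(b, a)}. mvar j - mvar i :: 'a mpoly)"
  have "(b, a) \<in> P" using assms by (auto simp: P_def)
  moreover have "finite P" unfolding P_def using assms(1) by (intro finite_pairs) simp
  ultimately have "vandermonde_on ?S = (mvar a - mvar b) * R"
    unfolding vandermonde_on_def P_def[symmetric] R_def by (subst prod.remove) auto
  moreover obtain q\<^sub>a where "R = q\<^sub>a * vandermonde_on (insert a T)"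
    using vandermonde_on_dvd[of ?S "insert a T" "P - {(b, a)}"] assms unfolding R_def P_def by fastforce
  moreover obtain q\<^sub>b where "R = q\<^sub>b * vandermonde_on (insert b T)"
    using vandermonde_on_dvd[of ?S "insert b T" "P - {(b, a)}"] assms unfolding R_def P_def by fastforce
  ultimately show thesis using that by blast
qed

lemma obtain_insert2_less:
  fixes S :: "nat set"
  assumes "finite S" "2 \<le> card S"
  obtains a b T where "S = insert a (insert b T)" "finite T" "a \<notin> T" "b \<notin> T" "b < a"
proof -
  obtain x B where S: "S = insert x B" "x \<notin> B" "1 \<le> card B" "finite B"
    using card_le_Suc_iff[of 1 S] assms(2) by auto
  then obtain y T where B: "B = insert y T" "y \<notin> T" "finite T"
    using card_le_Suc_iff[of 0 B] by auto
  show thesis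
  proof (cases "x < y")
    case True
    then show thesis using that[of y x T] S B by (auto simp: insert_commute)
  next
    case False
    then show thesis using that[of x y T] S B by (auto simp: linorder_not_less le_less)
  qed
qed

lemma vandermonde_on_mult_herm_gs_in_gen_ideal:
  fixes f :: "'a::comm_ring_1 poly"
  assumes "finite S" "S \<noteq> {}" "S \<subseteq> {..<n}"
  shows "vandermonde_on S * herm_gs f S \<in> gen_ideal n (upoly_at f)"
  using assms
proof (induction "card S" arbitrary: S rule: less_induct)
  case less
  show ?case
  proof (cases "card S = 1")
    case True
    then obtain a where S: "S = {a}" by (auto simp: card_Suc_eq)
    have no_pairs: "{(i, j). i \<in> {a} \<and> j \<in> {a} \<and> i < (j::nat)} = {}" by auto
    have "vandermonde_on S = (1::'a mpoly)" unfolding vandermonde_on_def S no_pairs by simp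
    then show ?thesis using less.prems S by (simp add: herm_gs_single gen_ideal_gen)
  next
    case False
    moreover have "card S \<noteq> 0" using less.prems by simp
    ultimately have "2 \<le> card S" by linarith
    with less.prems(1) obtain a b T
      where S: "S = insert a (insert b T)" and abT: "finite T" "a \<notin> T" "b \<notin> T" "b < a"
      by (rule obtain_insert2_less)
    obtain R q\<^sub>a q\<^sub>b :: "'a mpoly" where R: "vandermonde_on S = (mvar a - mvar b) * R"
      and q: "R = q\<^sub>a * vandermonde_on (insert a T)" "R = q\<^sub>b * vandermonde_on (insert b T)"
      using vandermonde_on_insert2[OF abT] unfolding S by metis
    have "card (insert a T) < card S" "card (insert b T) < card S"
      using abT by (simp_all add: S)
    then have IH: "vandermonde_on (insert a T) * herm_gs f (insert a T) \<in> gen_ideal n (upoly_at f)"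
        "vandermonde_on (insert b T) * herm_gs f (insert b T) \<in> gen_ideal n (upoly_at f)"
      using less.hyps abT less.prems(3) by (auto simp: S)
    have "vandermonde_on S * herm_gs f S = R * ((mvar a - mvar b) * herm_gs f S)"
      by (simp only: R mult_ac)
    also have "\<dots> = R * herm_gs f (insert a T) - R * herm_gs f (insert b T)"
      using herm_gs_diff[of T a b f] abT by (simp add: S right_diff_distrib)
    also have "R * herm_gs f (insert a T) = q\<^sub>a * (vandermonde_on (insert a T) * herm_gs f (insert a T))"
      by (simp add: q(1) mult.assoc)
    also have "R * herm_gs f (insert b T) = q\<^sub>b * (vandermonde_on (insert b T) * herm_gs f (insert b T))"
      by (simp add: q(2) mult.assoc)
    finally show ?thesis using IH by (simp add: gen_ideal_diff gen_ideal_mult)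
  qed
qed

lemma vandermonde_mult_in_gen_ideal:
  fixes f :: "'a::comm_ring_1 poly"
  assumes "p \<in> gen_ideal n (\<lambda>k. herm_gs f {..k})"
  shows "vandermonde n * p \<in> gen_ideal n (upoly_at f)"
proof -
  have "vandermonde n * herm_gs f {..j} \<in> gen_ideal n (upoly_at f)" if j: "j < n" for j
  proof -
    have "{..j} \<subseteq> {..<n}" using j by auto
    then obtain q where "vandermonde_on {..<n} = q * (vandermonde_on {..j} :: 'a mpoly)"
      using vandermonde_on_dvd_subset by blast
    moreover have "vandermonde_on {..j} * herm_gs f {..j} \<in> gen_ideal n (upoly_at f)"
      using that by (intro vandermonde_on_mult_herm_gs_in_gen_ideal) auto
    ultimately show ?thesis
      by (simp add: vandermonde_eq_vandermonde_on mult.assoc gen_ideal_mult)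
  qed
  moreover obtain c where "p = (\<Sum>j<n. c j * herm_gs f {..j})"
    using assms by (auto simp: gen_ideal_def)
  then have "vandermonde n * p = (\<Sum>j<n. c j * (vandermonde n * herm_gs f {..j}))"
    by (simp add: sum_distrib_left ac_simps)
  ultimately show ?thesis by (auto intro: gen_ideal_sum gen_ideal_mult)
qed

lemma lookup_prod_keys_le:
  fixes \<phi> :: "'b \<Rightarrow> 'a::comm_ring_1 mpoly"
  assumes "finite P" "\<And>p m l. p \<in> P \<Longrightarrow> m \<in> keys (\<phi> p) \<Longrightarrow> lookup m l \<le> w p l"
  shows "m \<in> keys (\<Prod>p\<in>P. \<phi> p) \<Longrightarrow> lookup m l \<le> (\<Sum>p\<in>P. w p l)"
  using assms
proof (induction P arbitrary: m rule: finite_induct)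
  case empty
  then show ?case by (simp split: if_splits)
next
  case (insert x F)
  obtain a b where ab: "m = a + b" "a \<in> keys (\<phi> x)" "b \<in> keys (\<Prod>p\<in>F. \<phi> p)"
    using keys_mult_sub insert.prems(1) insert.hyps by (metis prod.insert)
  have "lookup a l \<le> w x l" using insert.prems(2) ab(2) by blast
  moreover have "lookup b l \<le> (\<Sum>p\<in>F. w p l)" using insert.IH[OF ab(3)] insert.prems(2) by blast
  ultimately have "lookup m l \<le> w x l + (\<Sum>p\<in>F. w p l)" using ab(1) by (simp add: lookup_add)
  also have "\<dots> = (\<Sum>p\<in>insert x F. w p l)" using insert.hyps by (simp add: sum.insert)
  finally show ?case .
qed

lemma card_pairs_containing_le:
  "card {p \<in> {(i, j). i < j \<and> j < n}. l = fst p \<or> l = snd p} \<le> (if l < n then n - 1 else 0)"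
proof (cases "l < n")
  case True
  let ?Q = "{p \<in> {(i, j). i < j \<and> j < n}. l = fst p \<or> l = snd p}"
  define other where "other p = (if fst p = l then snd p else fst p)" for p :: "nat \<times> nat"
  have "inj_on other ?Q" and "other ` ?Q \<subseteq> {..<n} - {l}"
    unfolding inj_on_def other_def by auto
  then have "card ?Q \<le> card ({..<n} - {l})" by (rule card_inj_on_le) simp
  then show ?thesis using True by simp
next
  case False
  then have no_pairs: "{p \<in> {(i, j). i < j \<and> j < n}. l = fst p \<or> l = snd p} = {}" by auto
  show ?thesis unfolding no_pairs by simp
qed

lemma lookup_vandermonde_keys_le:
  assumes "m \<in> keys (vandermonde n :: 'a::comm_ring_1 mpoly)"
  shows "lookup m l \<le> (if l < n then n - 1 else 0)"
proof -
  define P where "P = {(i, j). i < j \<and> j < (n::nat)}"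
  have "P \<subseteq> {..<n} \<times> {..<n}" unfolding P_def by auto
  then have fP: "finite P" using finite_subset by blast
  define w where "w p l = (if l = fst p \<or> l = snd p then 1 else (0::nat))" for p :: "nat \<times> nat" and l
  define \<phi> where "\<phi> p = (mvar (snd p) - mvar (fst p) :: 'a mpoly)" for p :: "nat \<times> nat"
  have "vandermonde n = (\<Prod>p\<in>P. \<phi> p)"
    unfolding vandermonde_def P_def \<phi>_def by (rule prod.cong) auto
  then have mP: "m \<in> keys (\<Prod>p\<in>P. \<phi> p)" using assms by simp
  have wb: "lookup m' l' \<le> w p l'" if "p \<in> P" "m' \<in> keys (\<phi> p)" for p m' l'
  proof -
    have "m' \<in> keys (mvar (snd p) :: 'a mpoly) \<or> m' \<in> keys (mvar (fst p) :: 'a mpoly)"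
      using that(2) keys_diff[of "mvar (snd p) :: 'a mpoly" "mvar (fst p)"] unfolding \<phi>_def by blast
    then show ?thesis by (auto simp: mvar_def w_def lookup_single when_def)
  qed
  have "lookup m l \<le> (\<Sum>p\<in>P. w p l)"
    by (rule lookup_prod_keys_le[OF fP wb mP])
  also have "\<dots> = card {p\<in>P. l = fst p \<or> l = snd p}"
    unfolding w_def using fP by (subst sum.inter_filter[symmetric]) auto
  also have "\<dots> \<le> (if l < n then n - 1 else 0)"
    unfolding P_def by (rule card_pairs_containing_le)
  finally show ?thesis .
qed

lemma reduced_vandermonde_mult:
  assumes n: "1 \<le> n" "n \<le> d"
    and r_vars: "\<And>m. m \<in> keys r \<Longrightarrow> keys m \<subseteq> {..<n}"
    and r_exps: "\<And>m i. m \<in> keys r \<Longrightarrow> i < n \<Longrightarrow> lookup m i \<le> d - n"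
  shows "reduced n (\<lambda>_. d) (vandermonde n * r)"
  unfolding reduced_def
proof
  fix x assume "x \<in> keys (vandermonde n * r)"
  then obtain a b where x: "x = a + b" and a: "a \<in> keys (vandermonde n :: 'a mpoly)" and b: "b \<in> keys r"
    using keys_mult_sub by blast
  have "keys x \<subseteq> {..<n}"
  proof
    fix l assume "l \<in> keys x"
    then have "lookup a l \<noteq> 0 \<or> lookup b l \<noteq> 0" by (auto simp: x in_keys_iff lookup_add)
    moreover have "n \<le> l \<Longrightarrow> lookup a l = 0" using lookup_vandermonde_keys_le[OF a, of l] by simp
    moreover have "n \<le> l \<Longrightarrow> lookup b l = 0" using r_vars[OF b] by (auto simp: in_keys_iff)
    ultimately show "l \<in> {..<n}" by force
  qed
  moreover have "lookup x i < d" if "i < n" for i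
    using lookup_vandermonde_keys_le[OF a, of i] r_exps[OF b that] that n by (simp add: x lookup_add)
  ultimately show "keys x \<subseteq> {..<n} \<and> (\<forall>i<n. lookup x i < d)" by blast
qed

section \<open>Symmetry of the remainder\<close>

lemma divdiff_in_gen_ideal:
  fixes t :: "nat \<Rightarrow> 'a::idom mpoly"
  assumes "\<And>j. j < n \<Longrightarrow> divdiff k (t j) \<in> gen_ideal n t" "p \<in> gen_ideal n t"
  shows "divdiff k p \<in> gen_ideal n t"
proof -
  obtain c where c: "p = (\<Sum>j<n. c j * t j)" using assms(2) by (auto simp: gen_ideal_def)
  have "divdiff k p = (\<Sum>j<n. divdiff k (c j) * t j + mrename (transpose k (Suc k)) (c j) * divdiff k (t j))"
    unfolding c divdiff_sum by (simp add: divdiff_mult)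
  also have "\<dots> \<in> gen_ideal n t"
    by (intro gen_ideal_sum gen_ideal_add gen_ideal_mult gen_ideal_gen assms(1)) auto
  finally show ?thesis .
qed

lemma mrename_transpose_herm_gs_atMost:
  assumes "j \<noteq> k"
  shows "mrename (transpose k (Suc k)) (herm_gs f {..j}) = herm_gs f {..j}"
proof -
  have "transpose k (Suc k) ` {..j} = {..j}"
    using assms by (cases "j < k") (auto simp: transpose_def image_iff)
  then show ?thesis by (simp add: transpose.mrename_herm_gs)
qed

lemma divdiff_herm_gs_atMost:
  fixes f :: "'a::idom poly"
  shows "divdiff k (herm_gs f {..k}) = - herm_gs f {..Suc k}"
proof (rule divdiff_unique[symmetric])
  have "{..Suc k} = insert (Suc k) (insert k {..<k})" and "{..k} = insert k {..<k}" by auto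
  then have "(mvar (Suc k) - mvar k) * herm_gs f {..Suc k}
      = herm_gs f (insert (Suc k) {..<k}) - herm_gs f {..k}"
    using herm_gs_diff[of "{..<k}" "Suc k" k f] by simp
  moreover have "transpose k (Suc k) ` {..k} = insert (Suc k) {..<k}"
    by (auto simp: transpose_def image_iff)
  ultimately show "(mvar (Suc k) - mvar k) * - herm_gs f {..Suc k}
      = herm_gs f {..k} - mrename (transpose k (Suc k)) (herm_gs f {..k})"
    by (simp add: transpose.mrename_herm_gs)
qed

lemma divdiff_herm_gs_in_gen_ideal:
  fixes f :: "'a::idom poly"
  assumes "Suc k < n" "j < n"
  shows "divdiff k (herm_gs f {..j}) \<in> gen_ideal n (\<lambda>k. herm_gs f {..k})"
proof (cases "j = k")
  case True
  then show ?thesis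
    using assms gen_ideal_gen[of "Suc k" n "\<lambda>k. herm_gs f {..k}"]
    by (simp add: divdiff_herm_gs_atMost gen_ideal_uminus)
next
  case False
  then show ?thesis by (simp add: mrename_transpose_herm_gs_atMost divdiff_eq_0_if_invariant)
qed

lemma reduced_divdiff:
  assumes r: "reduced n e r" and k: "Suc k < n" "e k = Suc (e (Suc k))"
  shows "reduced n e (divdiff k r)"
  unfolding reduced_def
proof
  fix x assume "x \<in> keys (divdiff k r)"
  then obtain m \<alpha> \<beta> where m: "m \<in> keys r" and x: "x = mono_upd_pair k m \<alpha> \<beta>"
    and \<alpha>\<beta>: "\<alpha> < max (lookup m k) (lookup m (Suc k))" "\<beta> < max (lookup m k) (lookup m (Suc k))"
    using keys_divdiff keys_divdiff_mono by blast
  have m_vars: "keys m \<subseteq> {..<n}" and m_exps: "\<forall>i<n. lookup m i < e i"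
    using r m by (auto simp: reduced_def)
  then have "lookup m k < e k" "lookup m (Suc k) < e (Suc k)" using k(1) by auto
  then have "\<alpha> < e (Suc k)" "\<beta> < e (Suc k)" using \<alpha>\<beta> k(2) by (simp_all add: max_def split: if_splits)
  then have "\<forall>i<n. lookup x i < e i" using m_exps k by (simp add: x lookup_mono_upd_pair)
  moreover have "keys x \<subseteq> insert k (insert (Suc k) (keys m))"
    by (auto simp: x in_keys_iff lookup_mono_upd_pair split: if_splits)
  then have "keys x \<subseteq> {..<n}" using m_vars k by auto
  ultimately show "keys x \<subseteq> {..<n} \<and> (\<forall>i<n. lookup x i < e i)" by blast
qed

text \<open>\<open>\<partial>\<^sub>k r = - \<partial>\<^sub>k (h - r)\<close> lies in the ideal and is reduced, hence vanishes.\<close>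
lemma remainder_transpose_invariant:
  fixes t :: "nat \<Rightarrow> 'a::idom mpoly"
  assumes tri: "triangular n t e" and k: "Suc k < n" "e k = Suc (e (Suc k))"
    and t: "\<And>j. j < n \<Longrightarrow> divdiff k (t j) \<in> gen_ideal n t"
    and h: "mrename (transpose k (Suc k)) h = h"
    and r: "reduced n e r" "h - r \<in> gen_ideal n t"
  shows "mrename (transpose k (Suc k)) r = r"
proof -
  have "divdiff k (h - r) \<in> gen_ideal n t" by (rule divdiff_in_gen_ideal[OF t r(2)])
  then have "divdiff k r \<in> gen_ideal n t"
    using divdiff_eq_0_if_invariant[OF h] gen_ideal_uminus by (fastforce simp: divdiff_diff)
  moreover have "reduced n e (divdiff k r)" using r(1) k by (rule reduced_divdiff)
  ultimately have "divdiff k r = 0" using reduced_in_gen_ideal_eq_0[OF tri] by blast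
  then show ?thesis by (rule invariant_if_divdiff_eq_0)
qed

lemma lookup_le_if_transpose_invariant:
  assumes inv: "\<And>k. Suc k < n \<Longrightarrow> mrename (transpose k (Suc k)) r = r"
    and last: "\<And>m. m \<in> keys r \<Longrightarrow> lookup m (n - 1) \<le> b"
    and "m \<in> keys r" "i < n"
  shows "lookup m i \<le> b"
proof -
  have "\<forall>m\<in>keys r. lookup m (n - 1 - j) \<le> b" if "j < n" for j
    using that
  proof (induction j)
    case 0
    then show ?case using last by simp
  next
    case (Suc j)
    define k where "k = n - 1 - Suc j"
    have k: "Suc k = n - 1 - j" "Suc k < n" using Suc.prems by (auto simp: k_def)
    show ?case
    proof
      fix m assume "m \<in> keys r"
      then have "mono_rename (transpose k (Suc k)) m \<in> keys r"
        using inv[OF k(2)] transpose.keys_mrename by (metis image_eqI)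
      then have "lookup (mono_rename (transpose k (Suc k)) m) (Suc k) \<le> b"
        using Suc k by simp
      then show "lookup m (n - 1 - Suc j) \<le> b"
        unfolding k_def[symmetric] by (simp add: transpose.lookup_mono_rename)
    qed
  qed
  from this[of "n - 1 - i"] assms(3,4) show ?thesis by simp
qed

lemma lookup_symmetric_remainder_le:
  fixes f :: "'a::idom poly"
  assumes f: "n \<le> degree f" "lead_coeff f = 1" and h: "symmetric_in n h"
    and r: "reduced n (\<lambda>k. degree f - k) r" "h - r \<in> gen_ideal n (\<lambda>k. herm_gs f {..k})"
    and m: "m \<in> keys r" "i < n"
  shows "lookup m i \<le> degree f - n"
proof (rule lookup_le_if_transpose_invariant[OF _ _ m])
  show "mrename (transpose k (Suc k)) r = r" if k: "Suc k < n" for k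
  proof (rule remainder_transpose_invariant[OF triangular_herm_gs[OF f] k _ _ _ r])
    show "degree f - k = Suc (degree f - Suc k)" using k f(1) by simp
    show "divdiff k (herm_gs f {..j}) \<in> gen_ideal n (\<lambda>k. herm_gs f {..k})" if "j < n" for j
      using divdiff_herm_gs_in_gen_ideal k that by blast
    show "mrename (transpose k (Suc k)) h = h"
      using h permutes_swap_id[of k "{..<n}" "Suc k"] k by (simp add: symmetric_in_def)
  qed
  fix m' assume "m' \<in> keys r"
  moreover have "n - 1 < n" using m(2) by simp
  ultimately have "lookup m' (n - 1) < degree f - (n - 1)" using r(1) unfolding reduced_def by blast
  then show "lookup m' (n - 1) \<le> degree f - n" using m(2) f(1) by simp
qed

theorem proposition3p3:
  fixes A :: "'a::field_char_0 multiset" and n d :: nat and h :: "'a mpoly"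
  assumes "1 \<le> n" and "n \<le> d" and "size A = d"
    and "symmetric_in n h"
  shows "vandermonde n * sym_hermite A n h = normal_form n (herm_F A n) (vandermonde n * h)"
proof -
  define f where "f = mset_poly A"
  have f: "degree f = d" "lead_coeff f = 1"
    using mset_poly_monic[of A] assms(3) by (auto simp: f_def)
  have tri_G: "triangular n (\<lambda>k. herm_gs f {..k}) (\<lambda>k. d - k)"
    using triangular_herm_gs[of n f] f assms(2) by simp
  have h_vars: "\<forall>m\<in>keys h. keys m \<subseteq> {..<n}"
    using assms(4) by (auto simp: symmetric_in_def mvars_def)
  obtain r where r: "reduced n (\<lambda>k. d - k) r" "h - r \<in> gen_ideal n (\<lambda>k. herm_gs f {..k})"
    using reduced_remainder_exists[OF tri_G h_vars] by blast
  have sym_hermite: "sym_hermite A n h = r"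
    unfolding sym_hermite_def herm_G_eq_image f_def[symmetric]
    by (rule normal_form_eqI[OF tri_G _ r]) (use assms(2) in simp)
  have "reduced n (\<lambda>_. d) (vandermonde n * r)"
  proof (rule reduced_vandermonde_mult[OF assms(1,2)])
    show "keys m \<subseteq> {..<n}" if "m \<in> keys r" for m
      using r(1) that by (simp add: reduced_def)
    show "lookup m i \<le> d - n" if "m \<in> keys r" "i < n" for m i
      using lookup_symmetric_remainder_le[of n f h r m i] f assms(2,4) r that by simp
  qed
  moreover have "vandermonde n * h - vandermonde n * r \<in> gen_ideal n (upoly_at f)"
    using vandermonde_mult_in_gen_ideal[OF r(2)] by (simp add: right_diff_distrib)
  ultimately have "normal_form n (upoly_at f ` {..<n}) (vandermonde n * h) = vandermonde n * r"
    using triangular_upoly_at[of f n] f assms(1,2) by (intro normal_form_eqI) auto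
  then show ?thesis by (simp add: sym_hermite herm_F_def f_def)
qed

end
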